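(* In the setting of the context, suppose that $\mathbf 1=(1,\dots,1)$ is a (uniformly) globally asymptotically stable equilibrium of $\dot o_k(t)=\dfrac{\pi_k(0,\mu^*,o(t))}{\gamma_k(\mu^* )}-o_k(t)$, $k\in[K]$. Then $(0,\mu^*,\mathbf 1)$ is a (uniformly) globally asymptotically stable equilibrium of the time-independent system $\dot{\bar\theta}(t)=\bar g(\bar\theta(t))$.
   Context: $K\ge2$, $M\ge1$, $\varepsilon>0$; $\mathcal{P}^\varepsilon(K)$ is the set of probability vectors on $[K]$ with entries $\ge\varepsilon$; $O^\varepsilon=\{o\in\mathbb{R}^K_{\ge0}:\sum_ko_k\le\varepsilon^{-1}\}$; $\Theta=\mathbb{R}^K\times\mathbb{R}^{KM}\times O^\varepsilon$; $\pi:\Theta\to\mathcal P^\varepsilon(K)$ and $\gamma:\mathbb{R}^{KM}\to\mathcal P^\varepsilon(K)$ are continuously differentiable; $\mu^*\in\mathbb{R}^{KM}$ is fixed. The system $\dot{\bar\theta}=\bar g(\bar\theta)$, $\bar\theta=(\bar F,\mu,o)$, with $\bar F$ in the hyperplane $\{\sum_k\bar F_k=0\}$, is $\dot{\bar F}_k=\frac1K\sum_j\frac{e^{\bar F_j}}{\sum_\ell\pi_\ell(\bar\theta)e^{\bar F_\ell}}-\frac{e^{\bar F_k}}{\sum_\ell\pi_\ell(\bar\theta)e^{\bar F_\ell}}$, $\dot\mu_{km}=\frac{e^{\bar F_k}}{\sum_\ell\pi_\ell(\bar\theta)e^{\bar F_\ell}}(\mu^*_{km}-\mu_{km})$, $\dot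 o_k=\frac{\pi_k(\bar\theta)}{\gamma_k(\mu)}\frac{e^{\bar F_k}}{\sum_\ell\pi_\ell(\bar\theta)e^{\bar F_\ell}}-o_k$. Global asymptotic stability of $z^*$ for $\dot z=h(z,t)$: (1) for each $\eta>0$ there is $\delta>0$ independent of $t_0$ with $|z_0-z^*|<\delta\Rightarrow|z(t;z_0,t_0)-z^*|<\eta$ for all $t\ge t_0\ge0$; (2) for all $\eta,\rho>0$ there is $T(\rho,\eta)<\infty$ independent of $t_0$ with $|z(t;z_0,t_0)-z^*|<\eta$ for $t\ge t_0+T$ whenever $|z_0-z^*|<\rho$. *)

theory Defs
  imports "HOL-Analysis.Analysis"
begin

text \<open>Index set [K] is the finite type 'k (K = CARD('k)), index set [M] is 'm.
  R^K = real^'k, R^{KM} = real^'m^'k (entry mu_{km} = mu$k$m).\<close>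

definition prob_eps :: "real \<Rightarrow> (real^'k) set" where
  "prob_eps \<epsilon> = {p. (\<Sum>k\<in>UNIV. p$k) = 1 \<and> (\<forall>k. p$k \<ge> \<epsilon>)}"

definition O_eps :: "real \<Rightarrow> (real^'k) set" where
  "O_eps \<epsilon> = {w. (\<forall>k. w$k \<ge> 0) \<and> (\<Sum>k\<in>UNIV. w$k) \<le> 1 / \<epsilon>}"

definition Theta :: "real \<Rightarrow> ((real^'k) \<times> (real^'m^'k) \<times> (real^'k)) set" where
  "Theta \<epsilon> = UNIV \<times> UNIV \<times> O_eps \<epsilon>"

definition Theta_bar :: "real \<Rightarrow> ((real^'k) \<times> (real^'m^'k) \<times> (real^'k)) set" where
  "Theta_bar \<epsilon> = {(F, mu, w). (\<Sum>k\<in>UNIV. F$k) = 0 \<and> w \<in> O_eps \<epsilon>}"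

definition C1_on :: "'a::real_normed_vector set \<Rightarrow> ('a \<Rightarrow> 'b::real_normed_vector) \<Rightarrow> bool" where
  "C1_on S f \<longleftrightarrow> (\<exists>f'. (\<forall>x\<in>S. (f has_derivative blinfun_apply (f' x)) (at x within S))
                      \<and> continuous_on S f')"

definition gbar ::
  "((real^'k) \<times> (real^'m^'k) \<times> (real^'k) \<Rightarrow> real^'k) \<Rightarrow> (real^'m^'k \<Rightarrow> real^'k) \<Rightarrow> real^'m^'k
   \<Rightarrow> (real^'k) \<times> (real^'m^'k) \<times> (real^'k) \<Rightarrow> (real^'k) \<times> (real^'m^'k) \<times> (real^'k)" where
  "gbar \<pi> \<gamma> mus \<theta> = (case \<theta> of (F, mu, w) \<Rightarrow>
     (let Z = (\<Sum>l\<in>UNIV. \<pi> \<theta> $ l * exp (F$l)) in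
      ((\<chi> k. (1 / real CARD('k)) * (\<Sum>j\<in>UNIV. exp (F$j) / Z) - exp (F$k) / Z),
       (\<chi> k m. exp (F$k) / Z * (mus$k$m - mu$k$m)),
       (\<chi> k. \<pi> \<theta> $ k / \<gamma> mu $ k * (exp (F$k) / Z) - w$k))))"

definition is_solution :: "'a::real_normed_vector set \<Rightarrow> ('a \<Rightarrow> real \<Rightarrow> 'a) \<Rightarrow> real \<Rightarrow> (real \<Rightarrow> 'a) \<Rightarrow> bool" where
  "is_solution S h t0 z \<longleftrightarrow> (\<forall>t\<ge>t0. z t \<in> S \<and> (z has_vector_derivative h (z t) t) (at t within {t0..}))"

definition GAS :: "'a::real_normed_vector set \<Rightarrow> ('a \<Rightarrow> real \<Rightarrow> 'a) \<Rightarrow> 'a \<Rightarrow> bool" where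
  "GAS S h zs \<longleftrightarrow>
     zs \<in> S \<and> (\<forall>t\<ge>0. h zs t = 0) \<and>
     (\<forall>\<eta>>0. \<exists>\<delta>>0. \<forall>t0\<ge>0. \<forall>z. is_solution S h t0 z \<and> norm (z t0 - zs) < \<delta>
          \<longrightarrow> (\<forall>t\<ge>t0. norm (z t - zs) < \<eta>)) \<and>
     (\<forall>\<eta>>0. \<forall>\<rho>>0. \<exists>T. \<forall>t0\<ge>0. \<forall>z. is_solution S h t0 z \<and> norm (z t0 - zs) < \<rho>
          \<longrightarrow> (\<forall>t\<ge>t0 + T. norm (z t - zs) < \<eta>))"

end

theory Submission
  imports Defs
begin

text \<open>
  Along every solution, |F| and |mu - mus| are Lyapunov functions: while |F| \<le> R, the F- and
  mu-components of gbar have inner product at most -exp (-2R) times the squared deviation with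
  the deviation itself, so both deviations are nonincreasing and decay exponentially, at a rate
  fixed by their initial size.

  The o-component solves o' = b(theta) - o with b continuous and b(0, mus, o) = a(o), where
  o' = a(o) - o is the reduced system. Once F and mu - mus are small, o is thus a solution of the
  reduced system up to a uniformly small perturbation. As a is Lipschitz, on every bounded time
  window o stays close to the reduced solution with the same initial value, and the uniform
  stability and attractivity of the reduced equilibrium carry over to o. Reduced solutions from
  every initial value exist by a Picard iteration in a weighted space of bounded continuous
  functions.
\<close>

section \<open>Differential inequalities\<close>

lemma has_real_derivative_nonpos_imp_le:
  fixes g :: "real \<Rightarrow> real"
  assumes der: "\<And>t. t \<ge> t0 \<Longrightarrow> (g has_real_derivative g' t) (at t within {t0..})"
    and nonpos: "\<And>t. t \<ge> t0 \<Longrightarrow> g' t \<le> 0" and "t0 \<le> t"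
  shows "g t \<le> g t0"
proof -
  have "\<exists>x\<in>{t0..t}. g t - g t0 = (\<lambda>h. g' x * h) (t - t0)"
  proof (rule mvt_very_simple[OF \<open>t0 \<le> t\<close>])
    fix x assume "t0 \<le> x" "x \<le> t"
    then have "(g has_real_derivative g' x) (at x within {t0..t})"
      using der[of x] by (rule_tac has_field_derivative_subset) auto
    then show "(g has_derivative (\<lambda>h. g' x * h)) (at x within {t0..t})"
      by (simp add: has_field_derivative_def)
  qed
  then obtain x where "x \<in> {t0..t}" "g t - g t0 = g' x * (t - t0)" by auto
  moreover have "g' x * (t - t0) \<le> 0"
    using nonpos[of x] \<open>t0 \<le> t\<close> \<open>x \<in> {t0..t}\<close> by (simp add: mult_nonpos_nonneg)
  ultimately show ?thesis by linarith
qed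

lemma exp_decay_if_derivative_le:
  fixes \<phi> :: "real \<Rightarrow> real"
  assumes der: "\<And>t. t \<ge> t0 \<Longrightarrow> (\<phi> has_real_derivative \<phi>' t) (at t within {t0..})"
    and le: "\<And>t. t \<ge> t0 \<Longrightarrow> \<phi>' t \<le> - c * \<phi> t" and "t0 \<le> t"
  shows "\<phi> t \<le> exp (- c * (t - t0)) * \<phi> t0"
proof -
  let ?\<psi> = "\<lambda>t. exp (c * (t - t0)) * \<phi> t"
  have "?\<psi> t \<le> ?\<psi> t0"
  proof (rule has_real_derivative_nonpos_imp_le[OF _ _ \<open>t0 \<le> t\<close>])
    fix s assume s: "t0 \<le> s"
    show "(?\<psi> has_real_derivative exp (c * (s - t0)) * (c * \<phi> s + \<phi>' s)) (at s within {t0..})"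
      by (auto intro!: derivative_eq_intros der s simp: algebra_simps)
    show "exp (c * (s - t0)) * (c * \<phi> s + \<phi>' s) \<le> 0"
      using le[OF s] by (intro mult_nonneg_nonpos) auto
  qed
  then have "exp (- c * (t - t0)) * ?\<psi> t \<le> exp (- c * (t - t0)) * \<phi> t0"
    by (intro mult_left_mono) auto
  moreover have "exp (- c * (t - t0)) * ?\<psi> t = \<phi> t"
    unfolding mult.assoc[symmetric] exp_add[symmetric] by simp
  ultimately show ?thesis by linarith
qed

lemma norm_exp_decay_if_inner_derivative_le:
  fixes X :: "real \<Rightarrow> 'a::real_inner"
  assumes der: "\<And>t. t \<ge> t0 \<Longrightarrow> (X has_vector_derivative X' t) (at t within {t0..})"
    and le: "\<And>t. t \<ge> t0 \<Longrightarrow> X t \<bullet> X' t \<le> - c * (X t \<bullet> X t)" and "t0 \<le> t"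
  shows "norm (X t) \<le> exp (- c * (t - t0)) * norm (X t0)"
proof -
  have "((\<lambda>s. X s \<bullet> X s) has_real_derivative 2 * (X s \<bullet> X' s)) (at s within {t0..})"
    if "t0 \<le> s" for s
  proof -
    have "((\<lambda>s. X s \<bullet> X s) has_derivative (\<lambda>h. X s \<bullet> (h *\<^sub>R X' s) + (h *\<^sub>R X' s) \<bullet> X s))
        (at s within {t0..})"
      using der[OF that] unfolding has_vector_derivative_def by (intro has_derivative_inner)
    moreover have "(\<lambda>h. X s \<bullet> (h *\<^sub>R X' s) + (h *\<^sub>R X' s) \<bullet> X s) = (\<lambda>h. 2 * (X s \<bullet> X' s) * h)"
      by (auto simp: fun_eq_iff inner_commute algebra_simps)
    ultimately show ?thesis by (simp add: has_field_derivative_def)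
  qed
  then have "X t \<bullet> X t \<le> exp (- (2*c) * (t - t0)) * (X t0 \<bullet> X t0)"
    by (rule exp_decay_if_derivative_le[OF _ _ \<open>t0 \<le> t\<close>]) (use le in auto)
  then have "(norm (X t))\<^sup>2 \<le> (exp (- c * (t - t0)) * norm (X t0))\<^sup>2"
    by (simp add: power2_norm_eq_inner power_mult_distrib exp_of_nat_mult[symmetric] flip: exp_add)
      (simp add: power2_eq_square mult_exp_exp[symmetric] algebra_simps)
  then show ?thesis by (rule power2_le_imp_le) simp
qed

lemma perturbed_solution_dist_le_step:
  fixes x y p :: "real \<Rightarrow> 'a::real_normed_vector" and f :: "'a \<Rightarrow> 'a"
  assumes dx: "\<And>t. a \<le> t \<Longrightarrow> t \<le> a+h \<Longrightarrow> (x has_vector_derivative (f (x t) + p t)) (at t within {a..a+h})"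
    and dy: "\<And>t. a \<le> t \<Longrightarrow> t \<le> a+h \<Longrightarrow> (y has_vector_derivative f (y t)) (at t within {a..a+h})"
    and Lip: "\<And>t. a \<le> t \<Longrightarrow> t \<le> a+h \<Longrightarrow> norm (f (x t) - f (y t)) \<le> L * norm (x t - y t)"
    and p: "\<And>t. a \<le> t \<Longrightarrow> t \<le> a+h \<Longrightarrow> norm (p t) \<le> \<nu>"
    and h: "0 \<le> h" "h * L \<le> 1/2" and L: "0 \<le> L"
    and t: "a \<le> t" "t \<le> a+h"
  shows "norm (x t - y t) \<le> 2 * (norm (x a - y a) + h * \<nu>)"
proof -
  let ?g = "\<lambda>t. x t - y t"
  have dg: "(?g has_vector_derivative (f (x s) + p s - f (y s))) (at s within {a..a+h})"
    if "a \<le> s" "s \<le> a+h" for s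
    using has_vector_derivative_diff[OF dx[OF that] dy[OF that]] .
  have gc: "continuous_on {a..a+h} ?g"
    unfolding continuous_on_eq_continuous_within
    using dg has_vector_derivative_continuous by (metis atLeastAtMost_iff)
  have "\<exists>ts\<in>{a..a+h}. \<forall>s\<in>{a..a+h}. norm (?g s) \<le> norm (?g ts)"
    by (intro continuous_attains_sup continuous_on_norm gc) (use h in auto)
  then obtain ts where ts: "ts \<in> {a..a+h}" and max: "\<And>s. s \<in> {a..a+h} \<Longrightarrow> norm (?g s) \<le> norm (?g ts)"
    by blast
  define M where "M = norm (?g ts)"
  text \<open>Bounding the derivative by L M + \<nu> on [a, ts] gives M \<le> |g a| + (L M + \<nu>) h,
    which can be solved for M because h L \<le> 1/2.\<close>
  have "norm (?g ts - ?g a) \<le> (L * M + \<nu>) * norm (ts - a)"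
  proof (rule differentiable_bound[where S="{a..ts}" and f'="\<lambda>s d. d *\<^sub>R (f (x s) + p s - f (y s))"])
    fix s assume s: "s \<in> {a..ts}"
    then have s': "a \<le> s" "s \<le> a+h" using ts by auto
    show "(?g has_derivative (\<lambda>d. d *\<^sub>R (f (x s) + p s - f (y s)))) (at s within {a..ts})"
      using dg[OF s'] unfolding has_vector_derivative_def
      by (rule has_derivative_subset) (use ts in auto)
    have "onorm (\<lambda>d::real. d *\<^sub>R (f (x s) + p s - f (y s))) = norm (f (x s) + p s - f (y s))"
      using onorm_scaleR_left[of "\<lambda>d::real. d"] by (simp add: onorm_id bounded_linear_ident)
    also have "\<dots> \<le> norm (f (x s) - f (y s)) + norm (p s)"
      by (metis add_diff_eq diff_add_eq norm_triangle_ineq add.commute)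
    also have "\<dots> \<le> L * M + \<nu>"
      using Lip[OF s'] p[OF s'] max[of s] s' L unfolding M_def
      by (smt (verit) atLeastAtMost_iff mult_left_mono)
    finally show "onorm (\<lambda>d::real. d *\<^sub>R (f (x s) + p s - f (y s))) \<le> L * M + \<nu>" .
  qed (use ts in auto)
  also have "\<dots> \<le> (L * M + \<nu>) * h"
    using ts L p[of a] h
    by (intro mult_left_mono) (auto simp: M_def intro: add_nonneg_nonneg order_trans[OF norm_ge_zero])
  finally have "M \<le> norm (?g a) + (L * M + \<nu>) * h"
    unfolding M_def using norm_triangle_ineq2[of "?g ts" "?g a"] by linarith
  then have "M * (1 - h * L) \<le> norm (?g a) + h * \<nu>" by (simp add: algebra_simps)
  moreover have "M * (1/2) \<le> M * (1 - h * L)" using h by (intro mult_left_mono) (auto simp: M_def)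
  ultimately have "M \<le> 2 * (norm (?g a) + h * \<nu>)" by simp
  moreover have "norm (?g t) \<le> M" using max t unfolding M_def by auto
  ultimately show ?thesis by linarith
qed

lemma perturbed_solution_dist_le:
  fixes x y p :: "real \<Rightarrow> 'a::real_normed_vector" and f :: "'a \<Rightarrow> 'a"
  assumes dx: "\<And>t. a \<le> t \<Longrightarrow> (x has_vector_derivative (f (x t) + p t)) (at t within {a..})"
    and dy: "\<And>t. a \<le> t \<Longrightarrow> (y has_vector_derivative f (y t)) (at t within {a..})"
    and Lip: "\<And>t. a \<le> t \<Longrightarrow> norm (f (x t) - f (y t)) \<le> L * norm (x t - y t)"
    and p: "\<And>t. a \<le> t \<Longrightarrow> norm (p t) \<le> \<nu>"
    and h: "0 < h" "h \<le> 1" "h * L \<le> 1/2" and L: "0 \<le> L" and \<nu>: "0 \<le> \<nu>"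
  shows "a \<le> t \<Longrightarrow> t \<le> a + real n * h \<Longrightarrow> norm (x t - y t) \<le> 4^n * (norm (x a - y a) + \<nu>)"
proof (induction n arbitrary: t)
  case 0
  then show ?case using \<nu> by simp
next
  case (Suc n)
  let ?d = "norm (x a - y a) + \<nu>"
  have d: "0 \<le> ?d" using \<nu> by simp
  show ?case
  proof (cases "t \<le> a + real n * h")
    case True
    then have "norm (x t - y t) \<le> 4^n * ?d" using Suc by auto
    also have "\<dots> \<le> 4^Suc n * ?d" using d by (intro mult_right_mono) auto
    finally show ?thesis .
  next
    case False
    define a' where "a' = a + real n * h"
    have a': "a \<le> a'" using h by (simp add: a'_def)
    have "norm (x t - y t) \<le> 2 * (norm (x a' - y a') + h * \<nu>)"
    proof (rule perturbed_solution_dist_le_step[where f=f and p=p and L=L])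
      fix s assume s: "a' \<le> s" "s \<le> a' + h"
      show "(x has_vector_derivative (f (x s) + p s)) (at s within {a'..a'+h})"
        by (rule has_vector_derivative_within_subset[OF dx]) (use s a' in auto)
      show "(y has_vector_derivative f (y s)) (at s within {a'..a'+h})"
        by (rule has_vector_derivative_within_subset[OF dy]) (use s a' in auto)
      show "norm (f (x s) - f (y s)) \<le> L * norm (x s - y s)" using Lip s a' by auto
      show "norm (p s) \<le> \<nu>" using p s a' by auto
    qed (use h L False Suc.prems in \<open>auto simp: a'_def algebra_simps\<close>)
    also have "\<dots> \<le> 2 * (4^n * ?d + \<nu>)"
    proof -
      have "norm (x a' - y a') \<le> 4^n * ?d" using Suc.IH[of a'] a' by (simp add: a'_def)
      moreover have "h * \<nu> \<le> \<nu>" using h \<nu> by (simp add: mult_left_le_one_le)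
      ultimately show ?thesis by simp
    qed
    also have "\<dots> \<le> 4^Suc n * ?d"
    proof -
      have "\<nu> \<le> 1 * ?d" by simp
      also have "\<dots> \<le> 4^n * ?d" using d by (intro mult_right_mono) auto
      finally show ?thesis by simp
    qed
    finally show ?thesis .
  qed
qed

section \<open>The relaxation equation u' = A u - u\<close>

lemma exp_mult_has_integral:
  fixes c :: real
  assumes "c > 0" "0 \<le> \<tau>"
  shows "((\<lambda>r. exp (c * r)) has_integral (exp (c * \<tau>) - 1) / c) {0..\<tau>}"
proof -
  have "((\<lambda>r. exp (c * r) / c) has_vector_derivative exp (c * r)) (at r within {0..\<tau>})" for r
    using assms(1)
    by (auto intro!: derivative_eq_intros simp: has_real_derivative_iff_has_vector_derivative[symmetric])
  then have "((\<lambda>r. exp (c * r)) has_integral (exp (c * \<tau>) / c - exp (c * 0) / c)) {0..\<tau>}"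
    by (intro fundamental_theorem_of_calculus) (use assms in auto)
  then show ?thesis by (simp add: diff_divide_distrib)
qed

lemma continuous_on_integral_max0:
  fixes g :: "real \<Rightarrow> 'a::banach"
  assumes "continuous_on UNIV g"
  shows "continuous_on UNIV (\<lambda>t. integral {0..max 0 t} g)"
proof -
  have "isCont (\<lambda>t. integral {0..max 0 t} g) x" for x
  proof -
    define b where "b = \<bar>x\<bar> + 1"
    have "continuous_on {0..b} (\<lambda>t. integral {0..t} g)"
      by (rule indefinite_integral_continuous_1, rule integrable_continuous_real,
          rule continuous_on_subset[OF assms]) auto
    then have "continuous_on {..<b} ((\<lambda>t. integral {0..t} g) \<circ> max 0)"
      by (intro continuous_on_compose continuous_intros)
        (auto simp: b_def elim!: continuous_on_subset)
    moreover have "x \<in> {..<b}" unfolding b_def by auto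
    ultimately show ?thesis
      by (simp add: o_def continuous_on_eq_continuous_at)
  qed
  then show ?thesis by (simp add: continuous_at_imp_continuous_on)
qed

text \<open>Picard operator of u' = A u - u in integral form u t = exp (-t) (x0 + integral over [0, t]
  of exp r A (u r)), written for y t = exp (-L t) u t and extended constantly to t < 0. For
  L-Lipschitz A the rescaling makes it a contraction with constant L / (L + 1) in the sup norm.\<close>
definition relax_picard :: "('a::banach \<Rightarrow> 'a) \<Rightarrow> 'a \<Rightarrow> real \<Rightarrow> (real \<Rightarrow> 'a) \<Rightarrow> real \<Rightarrow> 'a" where
  "relax_picard A x0 L y t = exp (-(L+1) * max 0 t) *\<^sub>R
     (x0 + integral {0..max 0 t} (\<lambda>r. exp r *\<^sub>R A (exp (L*r) *\<^sub>R y r)))"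

lemma relax_picard_bcontfun:
  fixes A :: "'a::banach \<Rightarrow> 'a"
  assumes contA: "continuous_on UNIV A" and bnd: "\<And>x. norm (A x) \<le> B" and L: "0 \<le> L"
  shows "relax_picard A x0 L (apply_bcontfun y) \<in> bcontfun"
proof (rule bcontfun_normI)
  let ?g = "\<lambda>r. exp r *\<^sub>R A (exp (L*r) *\<^sub>R apply_bcontfun y r)"
  have gc: "continuous_on UNIV ?g"
    by (intro continuous_intros continuous_on_compose2[OF contA]) auto
  show "continuous_on UNIV (relax_picard A x0 L y)"
    unfolding relax_picard_def[abs_def] by (intro continuous_intros continuous_on_integral_max0 gc)
  fix t :: real
  define \<tau> where "\<tau> = max 0 t"
  have \<tau>: "0 \<le> \<tau>" by (simp add: \<tau>_def)
  have B: "0 \<le> B" using bnd[of 0] norm_ge_zero order_trans by blast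
  have exp_int: "((\<lambda>r. exp r * B) has_integral (exp \<tau> - 1) * B) {0..\<tau>}"
    using has_integral_mult_left[OF exp_mult_has_integral[of 1 \<tau>]] \<tau> by simp
  have gi: "?g integrable_on {0..\<tau>}"
    by (rule integrable_continuous_real, rule continuous_on_subset[OF gc]) auto
  have "norm (integral {0..\<tau>} ?g) \<le> integral {0..\<tau>} (\<lambda>r. exp r * B)"
    by (rule integral_norm_bound_integral[OF gi has_integral_integrable[OF exp_int]])
      (simp add: bnd mult_left_mono)
  also have "\<dots> = (exp \<tau> - 1) * B" using exp_int by (rule integral_unique)
  finally have "norm (relax_picard A x0 L y t) \<le> exp (-(L+1) * \<tau>) * (norm x0 + (exp \<tau> - 1) * B)"
    unfolding relax_picard_def \<tau>_def[symmetric]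
    by (auto intro!: mult_left_mono order_trans[OF norm_triangle_ineq])
  also have "\<dots> \<le> exp (-(L+1) * \<tau>) * norm x0 + exp (-(L+1) * \<tau>) * exp \<tau> * B"
    using B by (simp add: algebra_simps)
  also have "\<dots> \<le> norm x0 + B"
  proof -
    have "exp (-(L+1) * \<tau>) \<le> 1"
      using L \<tau> by (simp add: mult_nonpos_nonneg)
    moreover have "exp (-(L+1) * \<tau>) * exp \<tau> \<le> 1"
      using L \<tau> by (simp add: exp_add[symmetric] algebra_simps mult_nonneg_nonneg)
    ultimately show ?thesis
      using B by (intro add_mono) (auto intro: mult_left_le_one_le mult_le_one simp: mult_right_le_one_le)
  qed
  finally show "norm (relax_picard A x0 L y t) \<le> norm x0 + B" .
qed

lemma continuous_on_if_Lipschitz: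
  fixes A :: "'a::real_normed_vector \<Rightarrow> 'b::real_normed_vector"
  assumes "\<And>x x'. norm (A x - A x') \<le> L * norm (x - x')" and "0 \<le> L"
  shows "continuous_on UNIV A"
  by (rule lipschitz_on_continuous_on[where L=L]) (use assms in \<open>auto simp: lipschitz_on_def dist_norm\<close>)

lemma relax_picard_contraction:
  fixes A :: "'a::banach \<Rightarrow> 'a"
  assumes Lip: "\<And>x x'. norm (A x - A x') \<le> L * norm (x - x')" and L: "0 \<le> L"
  shows "dist (relax_picard A x0 L (apply_bcontfun y1) t) (relax_picard A x0 L (apply_bcontfun y2) t)
    \<le> L / (L+1) * dist y1 y2"
proof -
  define g where "g y r = exp r *\<^sub>R A (exp (L*r) *\<^sub>R apply_bcontfun y r)" for y r
  define \<tau> where "\<tau> = max 0 t"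
  have \<tau>: "0 \<le> \<tau>" by (simp add: \<tau>_def)
  let ?D = "dist y1 y2"
  have gi: "g y integrable_on {0..\<tau>}" for y
    unfolding g_def
    by (intro integrable_continuous_real continuous_intros
        continuous_on_compose2[OF continuous_on_if_Lipschitz[OF Lip L]]) auto
  have exp_int: "((\<lambda>r. L * ?D * exp ((L+1) * r)) has_integral L * ?D * ((exp ((L+1) * \<tau>) - 1) / (L+1))) {0..\<tau>}"
    using has_integral_mult_right[OF exp_mult_has_integral[of "L+1" \<tau>]] L \<tau> by simp
  have "norm (g y1 r - g y2 r) \<le> L * ?D * exp ((L+1) * r)" for r
  proof -
    have "norm (g y1 r - g y2 r) = exp r * norm (A (exp (L*r) *\<^sub>R y1 r) - A (exp (L*r) *\<^sub>R y2 r))"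
      by (simp add: g_def scaleR_diff_right[symmetric])
    also have "\<dots> \<le> exp r * (L * (exp (L*r) * norm (y1 r - y2 r)))"
      using Lip[of "exp (L*r) *\<^sub>R y1 r" "exp (L*r) *\<^sub>R y2 r"]
      by (simp add: scaleR_diff_right[symmetric])
    also have "\<dots> \<le> exp r * (L * (exp (L*r) * ?D))"
      using dist_bounded[of y1 r y2] L by (intro mult_left_mono) (auto simp: dist_norm)
    also have "\<dots> = L * ?D * exp ((L+1) * r)"
      by (simp add: exp_add[symmetric] algebra_simps)
    finally show ?thesis .
  qed
  then have int_bound: "norm (integral {0..\<tau>} (\<lambda>r. g y1 r - g y2 r))
      \<le> L * ?D * ((exp ((L+1) * \<tau>) - 1) / (L+1))"
    using integral_norm_bound_integral[OF integrable_diff[OF gi gi] has_integral_integrable[OF exp_int]]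
      integral_unique[OF exp_int] by simp
  have "dist (relax_picard A x0 L y1 t) (relax_picard A x0 L y2 t)
      = exp (-(L+1)*\<tau>) * norm (integral {0..\<tau>} (\<lambda>r. g y1 r - g y2 r))"
    by (simp add: relax_picard_def g_def[symmetric] \<tau>_def[symmetric] dist_norm
        integral_diff[OF gi gi] scaleR_diff_right[symmetric])
  also have "\<dots> \<le> exp (-(L+1)*\<tau>) * (L * ?D * ((exp ((L+1) * \<tau>) - 1) / (L+1)))"
    using int_bound by (intro mult_left_mono) auto
  also have "\<dots> = L * ?D / (L+1) * (1 - exp (-(L+1)*\<tau>))"
    using L by (simp add: field_simps flip: exp_add)
  also have "\<dots> \<le> L * ?D / (L+1) * 1"
    using L by (intro mult_left_mono) auto
  also have "\<dots> = L / (L+1) * ?D"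
    by simp
  finally show ?thesis .
qed

lemma relaxation_integral_equation_solvable:
  fixes A :: "'a::banach \<Rightarrow> 'a"
  assumes Lip: "\<And>x x'. norm (A x - A x') \<le> L * norm (x - x')" and L: "0 \<le> L"
    and bnd: "\<And>x. norm (A x) \<le> B"
  obtains u where "continuous_on UNIV u"
    and "\<And>t. 0 \<le> t \<Longrightarrow> u t = exp (-t) *\<^sub>R (x0 + integral {0..t} (\<lambda>r. exp r *\<^sub>R A (u r)))"
proof -
  define \<Psi> where "\<Psi> y = Bcontfun (relax_picard A x0 L (apply_bcontfun y))" for y
  have \<Psi>: "apply_bcontfun (\<Psi> y) = relax_picard A x0 L (apply_bcontfun y)" for y
    unfolding \<Psi>_def
    by (rule Bcontfun_inverse[OF relax_picard_bcontfun[OF continuous_on_if_Lipschitz[OF Lip L] bnd L]])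
  have "dist (\<Psi> y1) (\<Psi> y2) \<le> L / (L+1) * dist y1 y2" for y1 y2
    by (rule dist_bound) (unfold \<Psi>, rule relax_picard_contraction[OF Lip L])
  then obtain y where y: "\<Psi> y = y"
    using banach_fix_type[of "L/(L+1)" \<Psi>] L by auto
  define u where "u t = exp (L*t) *\<^sub>R apply_bcontfun y t" for t
  show thesis
  proof
    show "continuous_on UNIV u" unfolding u_def by (intro continuous_intros) auto
    fix t :: real assume t: "0 \<le> t"
    have "u t = exp (L*t) *\<^sub>R relax_picard A x0 L y t" using \<Psi>[of y] y by (simp add: u_def)
    also have "\<dots> = exp (-t) *\<^sub>R (x0 + integral {0..t} (\<lambda>r. exp r *\<^sub>R A (u r)))"
      using t by (simp add: relax_picard_def u_def algebra_simps flip: exp_add)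
    finally show "u t = exp (-t) *\<^sub>R (x0 + integral {0..t} (\<lambda>r. exp r *\<^sub>R A (u r)))" .
  qed
qed

lemma relaxation_integral_equation_has_vector_derivative:
  fixes A :: "'a::banach \<Rightarrow> 'a"
  assumes contu: "continuous_on UNIV u" and contA: "continuous_on UNIV A"
   and eq: "\<And>t. 0 \<le> t \<Longrightarrow> u t = exp (-t) *\<^sub>R (x0 + integral {0..t} (\<lambda>r. exp r *\<^sub>R A (u r)))"
   and t: "0 \<le> t"
  shows "(u has_vector_derivative A (u t) - u t) (at t within {0..})"
proof -
  let ?G = "\<lambda>r. exp r *\<^sub>R A (u r)"
  have "((\<lambda>s. integral {0..s} ?G) has_vector_derivative ?G t) (at t within {0..t+1})"
    by (rule integral_has_vector_derivative, rule continuous_on_subset[of UNIV])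
      (use t in \<open>auto intro!: continuous_intros continuous_on_compose2[OF contA contu]\<close>)
  moreover have "at t within {0..t+1} = at t within {0..}"
    by (rule at_within_nhd[of _ "{..<t+1}"]) auto
  ultimately have D: "((\<lambda>s. exp (-s) *\<^sub>R (x0 + integral {0..s} ?G)) has_vector_derivative
        exp (-t) *\<^sub>R ?G t + (- exp (-t)) *\<^sub>R (x0 + integral {0..t} ?G)) (at t within {0..})"
    by (auto intro!: has_vector_derivative_scaleR derivative_eq_intros)
  have "exp (-t) *\<^sub>R ?G t + (- exp (-t)) *\<^sub>R (x0 + integral {0..t} ?G) = A (u t) - u t"
    using eq[OF t] by (simp add: exp_minus)
  with D show ?thesis
    by (auto intro: has_vector_derivative_transform_within[where d=1] simp: eq t)
qed

lemma relaxation_integral_equation_in_O_eps: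
  fixes A :: "real^'k \<Rightarrow> real^'k" and u :: "real \<Rightarrow> real^'k"
  assumes contu: "continuous_on UNIV u" and contA: "continuous_on UNIV A"
   and eq: "\<And>t. 0 \<le> t \<Longrightarrow> u t = exp (-t) *\<^sub>R (x0 + integral {0..t} (\<lambda>r. exp r *\<^sub>R A (u r)))"
   and A: "\<And>x. A x \<in> O_eps \<epsilon>" and x0: "x0 \<in> O_eps \<epsilon>" and t: "0 \<le> t"
  shows "u t \<in> O_eps \<epsilon>"
proof -
  let ?G = "\<lambda>r. exp r *\<^sub>R A (u r)"
  have Gc: "continuous_on UNIV ?G"
    by (intro continuous_intros continuous_on_compose2[OF contA contu]) auto
  have Gki: "(\<lambda>r. exp r * A (u r) $ k) integrable_on {0..t}" for k
    by (rule integrable_continuous_real, rule continuous_on_subset[of UNIV])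
       (auto intro!: continuous_intros continuous_on_compose2[OF contA contu])
  have comp: "u t $ k = exp (-t) * (x0 $ k + integral {0..t} (\<lambda>r. exp r * A (u r) $ k))" for k
    using eq[OF t] integral_component_eq_cart[of ?G "{0..t}" k]
      integrable_continuous_real[OF continuous_on_subset[OF Gc]] by simp
  have Apos: "0 \<le> A x $ k" and Asum: "(\<Sum>k\<in>UNIV. A x $ k) \<le> 1/\<epsilon>" for x k
    using A[of x] by (auto simp: O_eps_def)
  have x0pos: "0 \<le> x0 $ k" and x0sum: "(\<Sum>k\<in>UNIV. x0 $ k) \<le> 1/\<epsilon>" for k
    using x0 by (auto simp: O_eps_def)
  have "0 \<le> u t $ k" for k
    unfolding comp using x0pos Apos
    by (intro mult_nonneg_nonneg add_nonneg_nonneg integral_nonneg Gki) auto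
  moreover have "(\<Sum>k\<in>UNIV. u t $ k) \<le> 1/\<epsilon>"
  proof -
    have "(\<Sum>k\<in>UNIV. integral {0..t} (\<lambda>r. exp r * A (u r) $ k))
        = integral {0..t} (\<lambda>r. exp r * (\<Sum>k\<in>UNIV. A (u r) $ k))"
      by (simp add: integral_sum[symmetric] Gki sum_distrib_left)
    also have "\<dots> \<le> integral {0..t} (\<lambda>r. exp r * (1/\<epsilon>))"
    proof (rule integral_le)
      show "(\<lambda>r. exp r * (\<Sum>k\<in>UNIV. A (u r) $ k)) integrable_on {0..t}"
        using integrable_sum[of UNIV "\<lambda>k r. exp r * A (u r) $ k"] Gki
        by (simp add: sum_distrib_left)
      show "(\<lambda>r. exp r * (1/\<epsilon>)) integrable_on {0..t}"
        by (intro integrable_continuous_real continuous_intros)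
    qed (use mult_left_mono[OF Asum, of "exp _"] in simp)
    also have "\<dots> = (exp t - 1) * (1/\<epsilon>)"
      using integral_unique[OF exp_mult_has_integral[of 1 t]] t by simp
    finally have "(\<Sum>k\<in>UNIV. u t $ k) \<le> exp (-t) * ((\<Sum>k\<in>UNIV. x0 $ k) + (exp t - 1) * (1/\<epsilon>))"
      unfolding comp by (simp add: sum.distrib sum_distrib_left[symmetric] mult_left_mono)
    also have "\<dots> \<le> exp (-t) * (1/\<epsilon> + (exp t - 1) * (1/\<epsilon>))"
      using x0sum by (intro mult_left_mono) auto
    also have "\<dots> = 1/\<epsilon>" by (simp add: algebra_simps exp_minus)
    finally show ?thesis .
  qed
  ultimately show ?thesis by (auto simp: O_eps_def)
qed

lemma relaxation_solution_in_O_eps_exists: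
  fixes A :: "real^'k \<Rightarrow> real^'k"
  assumes Lip: "\<And>x x'. norm (A x - A x') \<le> L * norm (x - x')" and L: "0 \<le> L"
    and A: "\<And>x. A x \<in> O_eps \<epsilon>" and x0: "x0 \<in> O_eps \<epsilon>"
  obtains u where "u 0 = x0"
    and "\<And>t. 0 \<le> t \<Longrightarrow> u t \<in> O_eps \<epsilon> \<and> (u has_vector_derivative A (u t) - u t) (at t within {0..})"
proof -
  have "norm (A x) \<le> 1/\<epsilon>" for x
    using norm_le_l1_cart[of "A x"] A[of x] by (simp add: O_eps_def)
  then obtain u where contu: "continuous_on UNIV u"
    and eq: "\<And>t. 0 \<le> t \<Longrightarrow> u t = exp (-t) *\<^sub>R (x0 + integral {0..t} (\<lambda>r. exp r *\<^sub>R A (u r)))"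
    using relaxation_integral_equation_solvable[OF Lip L] by blast
  have contA: "continuous_on UNIV A" by (rule continuous_on_if_Lipschitz[OF Lip L])
  show thesis
  proof
    show "u 0 = x0" using eq[of 0] by simp
    fix t :: real assume "0 \<le> t"
    then show "u t \<in> O_eps \<epsilon> \<and> (u has_vector_derivative A (u t) - u t) (at t within {0..})"
      using relaxation_integral_equation_in_O_eps[OF contu contA eq A x0]
        relaxation_integral_equation_has_vector_derivative[OF contu contA eq] by blast
  qed
qed

section \<open>Lyapunov estimates for F and mu\<close>

lemma exp_neg_abs_mult_square_le: "exp (-\<bar>x\<bar>) * x\<^sup>2 \<le> x * (exp x - 1)" for x :: real
proof (cases "x \<ge> 0")
  case True
  have "exp (-\<bar>x\<bar>) * x\<^sup>2 \<le> 1 * x\<^sup>2" using True by (intro mult_right_mono) auto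
  also have "\<dots> \<le> x * (exp x - 1)"
    using True mult_left_mono[of x "exp x - 1" x] exp_ge_add_one_self[of x] by (simp add: power2_eq_square)
  finally show ?thesis .
next
  case False
  have "exp x * (1 - x) \<le> exp x * exp (-x)"
    using exp_ge_add_one_self[of "-x"] by (intro mult_left_mono) auto
  then have "exp x * (-x) \<le> 1 - exp x" by (simp add: algebra_simps exp_minus)
  then have "(-x) * (exp x * (-x)) \<le> (-x) * (1 - exp x)" using False by (intro mult_left_mono) auto
  then show ?thesis using False by (simp add: power2_eq_square algebra_simps)
qed

lemma sum_mult_exp_ge_if_sum_zero:
  fixes F :: "real^'k"
  assumes "(\<Sum>k\<in>UNIV. F$k) = 0" and "\<And>k. \<bar>F$k\<bar> \<le> R"
  shows "exp (-R) * (F \<bullet> F) \<le> (\<Sum>k\<in>UNIV. F$k * exp (F$k))"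
proof -
  have "exp (-R) * (F \<bullet> F) = (\<Sum>k\<in>UNIV. exp (-R) * (F$k)\<^sup>2)"
    by (simp add: inner_vec_def sum_distrib_left power2_eq_square)
  also have "\<dots> \<le> (\<Sum>k\<in>UNIV. F$k * (exp (F$k) - 1))"
  proof (rule sum_mono)
    fix k
    have "exp (-R) * (F$k)\<^sup>2 \<le> exp (-\<bar>F$k\<bar>) * (F$k)\<^sup>2"
      using assms(2)[of k] by (intro mult_right_mono) auto
    also have "\<dots> \<le> F$k * (exp (F$k) - 1)" by (rule exp_neg_abs_mult_square_le)
    finally show "exp (-R) * (F$k)\<^sup>2 \<le> F$k * (exp (F$k) - 1)" .
  qed
  also have "\<dots> = (\<Sum>k\<in>UNIV. F$k * exp (F$k)) - (\<Sum>k\<in>UNIV. F$k)"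
    by (simp add: algebra_simps sum_subtractf)
  finally show ?thesis using assms(1) by simp
qed

lemma exp_mean_bounds:
  fixes F p :: "real^'k"
  assumes p: "p \<in> prob_eps \<epsilon>" and eps: "\<epsilon> > 0" and R: "norm F \<le> R"
  shows "0 < (\<Sum>l\<in>UNIV. p$l * exp (F$l))" and "(\<Sum>l\<in>UNIV. p$l * exp (F$l)) \<le> exp R"
proof -
  have pe: "\<And>l. \<epsilon> \<le> p$l" and ps: "(\<Sum>l\<in>UNIV. p$l) = 1" using p by (auto simp: prob_eps_def)
  show "0 < (\<Sum>l\<in>UNIV. p$l * exp (F$l))"
    using less_le_trans[OF eps pe] by (intro sum_pos mult_pos_pos) auto
  have "0 \<le> p$l" and "F$l \<le> R" for l
    using pe[of l] eps abs_ge_self[of "F$l"] component_le_norm_cart[of F l] R by linarith+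
  then have "(\<Sum>l\<in>UNIV. p$l * exp (F$l)) \<le> (\<Sum>l\<in>UNIV. p$l * exp R)"
    by (intro sum_mono mult_left_mono) auto
  also have "\<dots> = exp R" using ps by (simp add: sum_distrib_right[symmetric])
  finally show "(\<Sum>l\<in>UNIV. p$l * exp (F$l)) \<le> exp R" .
qed

lemma inner_F_field_le:
  fixes F p :: "real^'k"
  assumes p: "p \<in> prob_eps \<epsilon>" and eps: "\<epsilon> > 0" and R: "norm F \<le> R"
    and sum0: "(\<Sum>k\<in>UNIV. F$k) = 0"
  defines "Z \<equiv> (\<Sum>l\<in>UNIV. p$l * exp (F$l))"
  shows "F \<bullet> (\<chi> k. (1 / real CARD('k)) * (\<Sum>j\<in>UNIV. exp (F$j) / Z) - exp (F$k) / Z)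
          \<le> - exp (-2*R) * (F \<bullet> F)"
proof -
  have Z: "0 < Z" "Z \<le> exp R" using exp_mean_bounds[OF p eps R] by (auto simp: Z_def)
  have "\<bar>F$k\<bar> \<le> R" for k using component_le_norm_cart[of F k] R by linarith
  then have lower: "exp (-R) * (F \<bullet> F) \<le> (\<Sum>k\<in>UNIV. F$k * exp (F$k))"
    by (rule sum_mult_exp_ge_if_sum_zero[OF sum0])
  have "F \<bullet> (\<chi> k. (1 / real CARD('k)) * (\<Sum>j\<in>UNIV. exp (F$j) / Z) - exp (F$k) / Z)
      = (\<Sum>k\<in>UNIV. F$k) * ((1 / real CARD('k)) * (\<Sum>j\<in>UNIV. exp (F$j) / Z))
        - (\<Sum>k\<in>UNIV. F$k * exp (F$k)) / Z"
    by (simp add: inner_vec_def right_diff_distrib sum_subtractf sum_distrib_right sum_divide_distrib)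
  also have "\<dots> \<le> - (exp (-R) * (F \<bullet> F)) / Z"
    using sum0 lower Z by (simp add: divide_right_mono)
  also have "\<dots> \<le> - (exp (-R) * (F \<bullet> F)) / exp R"
    using Z by (simp add: divide_left_mono)
  also have "\<dots> = - exp (-2*R) * (F \<bullet> F)"
    by (simp add: exp_minus field_simps exp_double[symmetric] mult_exp_exp)
  finally show ?thesis .
qed

lemma inner_mu_field_le:
  fixes F p :: "real^'k" and mu mus :: "real^'m^'k"
  assumes p: "p \<in> prob_eps \<epsilon>" and eps: "\<epsilon> > 0" and R: "norm F \<le> R"
  defines "Z \<equiv> (\<Sum>l\<in>UNIV. p$l * exp (F$l))"
  shows "(mu - mus) \<bullet> (\<chi> k m. exp (F$k) / Z * (mus$k$m - mu$k$m))
          \<le> - exp (-2*R) * ((mu - mus) \<bullet> (mu - mus))"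
proof -
  have Z: "0 < Z" "Z \<le> exp R" using exp_mean_bounds[OF p eps R] by (auto simp: Z_def)
  have rate: "exp (-2*R) \<le> exp (F$k) / Z" for k
  proof -
    have "exp (-R) \<le> exp (F$k)" using component_le_norm_cart[of F k] R by simp
    then have "exp (-R) / exp R \<le> exp (F$k) / Z" using Z by (intro frac_le) auto
    then show ?thesis by (simp add: exp_minus field_simps mult_exp_exp)
  qed
  define S where "S k = (\<Sum>m\<in>UNIV. ((mu - mus)$k$m)\<^sup>2)" for k
  have sq: "(x - y) * (c * (y - x)) = - (c * (x - y)\<^sup>2)" for x y c :: real
    by (simp add: power2_eq_square algebra_simps)
  have "(mu - mus)$k$m * (exp (F$k) / Z * (mus$k$m - mu$k$m)) = - (exp (F$k) / Z * ((mu - mus)$k$m)\<^sup>2)"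
    for k m using sq[of "mu$k$m" "mus$k$m"] by simp
  then have "(mu - mus) \<bullet> (\<chi> k m. exp (F$k) / Z * (mus$k$m - mu$k$m)) = (\<Sum>k\<in>UNIV. - (exp (F$k) / Z * S k))"
    unfolding inner_vec_def inner_real_def S_def vec_lambda_beta sum_distrib_left by (simp add: sum_negf)
  also have "\<dots> \<le> (\<Sum>k\<in>UNIV. - (exp (-2*R) * S k))"
    using rate by (intro sum_mono le_imp_neg_le mult_right_mono) (auto simp: S_def intro: sum_nonneg)
  also have "\<dots> = - exp (-2*R) * ((mu - mus) \<bullet> (mu - mus))"
    unfolding inner_vec_def S_def by (simp add: sum_distrib_left power2_eq_square sum_negf)
  finally show ?thesis .
qed

lemma exp_decay_less:
  fixes \<rho> m X R t :: real
  assumes "0 < \<rho>" "0 < m" "0 \<le> X" "X < \<rho>" "R \<le> \<rho>" "ln (\<rho>/m) / exp (-2*\<rho>) \<le> t" "0 \<le> t"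
  shows "exp (- exp (-2*R) * t) * X < m"
proof -
  have "ln (\<rho>/m) \<le> exp (-2*\<rho>) * t"
    using assms(6) by (simp add: divide_le_eq mult.commute)
  also have "\<dots> \<le> exp (-2*R) * t"
    using assms(5,7) by (intro mult_right_mono) auto
  finally have "exp (- exp (-2*R) * t) \<le> exp (- ln (\<rho>/m))" by simp
  also have "\<dots> = m / \<rho>" using assms(1,2) by (simp add: exp_minus)
  finally have "exp (- exp (-2*R) * t) * X \<le> m / \<rho> * X"
    using assms(3) by (intro mult_right_mono) auto
  also have "\<dots> < m" using assms(1-4) by (simp add: field_simps)
  finally show ?thesis .
qed

section \<open>The system gbar\<close>

lemma has_vector_derivative_fst:
  "(f has_vector_derivative f') F \<Longrightarrow> ((\<lambda>x. fst (f x)) has_vector_derivative fst f') F"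
  unfolding has_vector_derivative_def by (drule has_derivative_fst) simp

lemma has_vector_derivative_snd:
  "(f has_vector_derivative f') F \<Longrightarrow> ((\<lambda>x. snd (f x)) has_vector_derivative snd f') F"
  unfolding has_vector_derivative_def by (drule has_derivative_snd) simp

lemma O_eps_closed: "closed (O_eps \<epsilon> :: (real^'k) set)"
proof -
  have "O_eps \<epsilon> = (\<Inter>k. {w::real^'k. 0 \<le> w$k}) \<inter> {w. (\<Sum>k\<in>UNIV. w$k) \<le> 1/\<epsilon>}"
    by (auto simp: O_eps_def)
  moreover have "closed {w::real^'k. 0 \<le> w$k}" for k
    by (intro closed_Collect_le continuous_intros)
  moreover have "closed {w::real^'k. (\<Sum>k\<in>UNIV. w$k) \<le> 1/\<epsilon>}"
    by (intro closed_Collect_le continuous_intros)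
  ultimately show ?thesis by (metis (no_types, lifting) closed_INT closed_Int)
qed

lemma O_eps_convex: "convex (O_eps \<epsilon> :: (real^'k) set)"
proof (rule convexI)
  fix x y :: "real^'k" and u v :: real
  assume "x \<in> O_eps \<epsilon>" "y \<in> O_eps \<epsilon>" and uv: "0 \<le> u" "0 \<le> v" "u + v = 1"
  then have x: "\<forall>k. 0 \<le> x$k" "(\<Sum>k\<in>UNIV. x$k) \<le> 1/\<epsilon>" and y: "\<forall>k. 0 \<le> y$k" "(\<Sum>k\<in>UNIV. y$k) \<le> 1/\<epsilon>"
    by (auto simp: O_eps_def)
  have "(\<Sum>k\<in>UNIV. u * x$k + v * y$k) = u * (\<Sum>k\<in>UNIV. x$k) + v * (\<Sum>k\<in>UNIV. y$k)"
    by (simp add: sum.distrib sum_distrib_left)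
  also have "\<dots> \<le> u * (1/\<epsilon>) + v * (1/\<epsilon>)"
    using x y uv by (intro add_mono mult_left_mono) auto
  also have "\<dots> = 1/\<epsilon>" using uv by (simp add: add_divide_distrib[symmetric])
  finally show "u *\<^sub>R x + v *\<^sub>R y \<in> O_eps \<epsilon>"
    using x y uv by (simp add: O_eps_def)
qed

lemma norm_le_if_in_O_eps: "(w::real^'k) \<in> O_eps \<epsilon> \<Longrightarrow> norm w \<le> 1/\<epsilon>"
  using norm_le_l1_cart[of w] by (auto simp: O_eps_def)

lemma O_eps_compact: "compact (O_eps \<epsilon> :: (real^'k) set)"
  unfolding compact_eq_bounded_closed bounded_iff
  using O_eps_closed norm_le_if_in_O_eps by blast

lemma C1_on_imp_continuous_on: "C1_on S f \<Longrightarrow> continuous_on S f"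
  unfolding C1_on_def continuous_on_eq_continuous_within
  using has_derivative_continuous by blast

lemma C1_on_Lipschitz_on_compact_convex:
  assumes C1: "C1_on T f" and "S \<subseteq> T" and "compact S" and "convex S"
  obtains B where "\<And>x y. x \<in> S \<Longrightarrow> y \<in> S \<Longrightarrow> norm (f x - f y) \<le> B * norm (x - y)"
proof -
  obtain f' where der: "\<And>x. x \<in> T \<Longrightarrow> (f has_derivative blinfun_apply (f' x)) (at x within T)"
    and "continuous_on T f'"
    using C1 unfolding C1_on_def by blast
  then have "bounded (f' ` S)"
    using assms(2,3) by (intro compact_imp_bounded compact_continuous_image) (auto elim: continuous_on_subset)
  then obtain B where B: "\<And>x. x \<in> S \<Longrightarrow> norm (f' x) \<le> B" unfolding bounded_iff by blast
  show thesis
  proof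
    fix x y assume "x \<in> S" "y \<in> S"
    show "norm (f x - f y) \<le> B * norm (x - y)"
    proof (rule differentiable_bound[OF \<open>convex S\<close> _ _ \<open>x \<in> S\<close> \<open>y \<in> S\<close>])
      fix z assume z: "z \<in> S"
      show "(f has_derivative blinfun_apply (f' z)) (at z within S)"
        using der[of z] z assms(2) by (auto intro: has_derivative_subset)
      show "onorm (blinfun_apply (f' z)) \<le> B" using B[OF z] by (simp add: norm_blinfun.rep_eq)
    qed
  qed
qed

lemma norm_diff_triple_le:
  fixes \<theta> :: "'a::real_normed_vector \<times> 'b::real_normed_vector \<times> 'c::real_normed_vector"
  shows "norm (\<theta> - (a, b, c)) \<le> norm (fst \<theta> - a) + norm (fst (snd \<theta>) - b) + norm (snd (snd \<theta>) - c)"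
    and "norm (fst \<theta> - a) \<le> norm (\<theta> - (a, b, c))"
    and "norm (fst (snd \<theta>) - b) \<le> norm (\<theta> - (a, b, c))"
    and "norm (snd (snd \<theta>) - c) \<le> norm (\<theta> - (a, b, c))"
proof -
  obtain F mu w where \<theta>: "\<theta> = (F, mu, w)" by (cases \<theta>) auto
  let ?x = "F - a" and ?y = "mu - b" and ?z = "w - c"
  have "\<theta> - (a, b, c) = (?x, ?y, ?z)" by (simp add: \<theta>)
  then show "norm (\<theta> - (a, b, c)) \<le> norm (fst \<theta> - a) + norm (fst (snd \<theta>) - b) + norm (snd (snd \<theta>) - c)"
    and "norm (fst \<theta> - a) \<le> norm (\<theta> - (a, b, c))"
    and "norm (fst (snd \<theta>) - b) \<le> norm (\<theta> - (a, b, c))"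
    and "norm (snd (snd \<theta>) - c) \<le> norm (\<theta> - (a, b, c))"
    using norm_Pair_le[of ?x "(?y, ?z)"] norm_Pair_le[of ?y ?z] norm_fst_le[of ?x "(?y, ?z)"]
      norm_snd_le[of "(?y, ?z)" ?x] norm_fst_le[of ?y ?z] norm_snd_le[of ?z ?y]
    by (simp_all add: \<theta>)
qed

abbreviation F_part :: "'a \<times> 'b \<times> 'c \<Rightarrow> 'a" where "F_part \<theta> \<equiv> fst \<theta>"
abbreviation mu_part :: "'a \<times> 'b \<times> 'c \<Rightarrow> 'b" where "mu_part \<theta> \<equiv> fst (snd \<theta>)"
abbreviation o_part :: "'a \<times> 'b \<times> 'c \<Rightarrow> 'c" where "o_part \<theta> \<equiv> snd (snd \<theta>)"

locale gbar_system =
  fixes \<epsilon> :: real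
    and \<pi> :: "(real^'k) \<times> (real^'m^'k) \<times> (real^'k) \<Rightarrow> real^'k"
    and \<gamma> :: "real^'m^'k \<Rightarrow> real^'k"
    and mus :: "real^'m^'k"
  assumes eps: "\<epsilon> > 0"
    and pi_range: "\<forall>\<theta>\<in>Theta \<epsilon>. \<pi> \<theta> \<in> prob_eps \<epsilon>"
    and pi_C1: "C1_on (Theta \<epsilon>) \<pi>"
    and gamma_range: "\<forall>mu. \<gamma> mu \<in> prob_eps \<epsilon>"
    and gamma_C1: "C1_on UNIV \<gamma>"
begin

abbreviation solution :: "real \<Rightarrow> (real \<Rightarrow> (real^'k) \<times> (real^'m^'k) \<times> (real^'k)) \<Rightarrow> bool" where
  "solution \<equiv> is_solution (Theta_bar \<epsilon>) (\<lambda>\<theta> t. gbar \<pi> \<gamma> mus \<theta>)"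

abbreviation reduced_solution :: "real \<Rightarrow> (real \<Rightarrow> real^'k) \<Rightarrow> bool" where
  "reduced_solution \<equiv> is_solution (O_eps \<epsilon>) (\<lambda>w t. \<chi> k. \<pi> (0, mus, w) $ k / \<gamma> mus $ k - w $ k)"

text \<open>The o-equation of gbar reads o' = drive theta - o, the reduced system o' = reduced_drive o - o.\<close>

definition reduced_drive :: "real^'k \<Rightarrow> real^'k" where
  "reduced_drive w = (\<chi> k. \<pi> (0, mus, w) $ k / \<gamma> mus $ k)"

definition drive :: "(real^'k) \<times> (real^'m^'k) \<times> (real^'k) \<Rightarrow> real^'k" where
  "drive \<theta> = (\<chi> k. \<pi> \<theta> $ k / \<gamma> (mu_part \<theta>) $ k *
      (exp (F_part \<theta> $ k) / (\<Sum>l\<in>UNIV. \<pi> \<theta> $ l * exp (F_part \<theta> $ l))))"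

lemma pi_prob: "\<theta> \<in> Theta \<epsilon> \<Longrightarrow> \<pi> \<theta> \<in> prob_eps \<epsilon>"
  using pi_range by blast

lemma pi_ge: "\<theta> \<in> Theta \<epsilon> \<Longrightarrow> \<epsilon> \<le> \<pi> \<theta> $ k"
  and pi_sum: "\<theta> \<in> Theta \<epsilon> \<Longrightarrow> (\<Sum>k\<in>UNIV. \<pi> \<theta> $ k) = 1"
  using pi_range by (auto simp: prob_eps_def)

lemma gamma_ge: "\<epsilon> \<le> \<gamma> mu $ k"
  using gamma_range by (auto simp: prob_eps_def)

lemma in_Theta_if_in_O_eps: "w \<in> O_eps \<epsilon> \<Longrightarrow> (F, mu, w) \<in> Theta \<epsilon>"
  by (simp add: Theta_def)

lemma reduced_drive_in_O_eps:
  assumes w: "w \<in> O_eps \<epsilon>"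
  shows "reduced_drive w \<in> O_eps \<epsilon>"
proof -
  have \<theta>: "(0, mus, w) \<in> Theta \<epsilon>" using in_Theta_if_in_O_eps[OF w] .
  have "0 \<le> reduced_drive w $ k" for k
    using pi_ge[OF \<theta>, of k] gamma_ge[of mus k] eps by (simp add: reduced_drive_def)
  moreover have "(\<Sum>k\<in>UNIV. reduced_drive w $ k) \<le> (\<Sum>k\<in>UNIV. \<pi> (0, mus, w) $ k / \<epsilon>)"
  proof (intro sum_mono)
    fix k
    have "0 \<le> \<pi> (0, mus, w) $ k" using pi_ge[OF \<theta>, of k] eps by linarith
    then show "reduced_drive w $ k \<le> \<pi> (0, mus, w) $ k / \<epsilon>"
      using gamma_ge[of mus k] eps by (simp add: reduced_drive_def divide_left_mono)
  qed
  moreover have "(\<Sum>k\<in>UNIV. \<pi> (0, mus, w) $ k / \<epsilon>) = 1/\<epsilon>"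
    using pi_sum[OF \<theta>] by (simp add: sum_divide_distrib[symmetric])
  ultimately show ?thesis by (simp add: O_eps_def)
qed

lemma reduced_drive_Lipschitz:
  obtains L where "0 \<le> L"
    and "\<And>x y. x \<in> O_eps \<epsilon> \<Longrightarrow> y \<in> O_eps \<epsilon> \<Longrightarrow> norm (reduced_drive x - reduced_drive y) \<le> L * norm (x - y)"
proof -
  define S where "S = {0::real^'k} \<times> {mus} \<times> (O_eps \<epsilon> :: (real^'k) set)"
  have "S \<subseteq> Theta \<epsilon>" "compact S" "convex S"
    unfolding S_def Theta_def
    by (auto intro!: compact_Times convex_Times O_eps_compact O_eps_convex)
  then obtain B where B: "\<And>x y. x \<in> S \<Longrightarrow> y \<in> S \<Longrightarrow> norm (\<pi> x - \<pi> y) \<le> B * norm (x - y)"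
    using C1_on_Lipschitz_on_compact_convex[OF pi_C1] by blast
  show thesis
  proof
    show "0 \<le> \<bar>B\<bar> / \<epsilon>" using eps by simp
    fix x y :: "real^'k" assume x: "x \<in> O_eps \<epsilon>" and y: "y \<in> O_eps \<epsilon>"
    let ?v = "\<pi> (0, mus, x) - \<pi> (0, mus, y)"
    have "norm (reduced_drive x - reduced_drive y) \<le> norm ((1/\<epsilon>) *\<^sub>R ?v)"
    proof (rule norm_le_componentwise_cart)
      fix k
      have "\<bar>(reduced_drive x - reduced_drive y) $ k\<bar> = \<bar>?v $ k\<bar> / \<gamma> mus $ k"
        using gamma_ge[of mus k] eps by (simp add: reduced_drive_def diff_divide_distrib[symmetric])
      also have "\<dots> \<le> \<bar>?v $ k\<bar> / \<epsilon>"
        using gamma_ge[of mus k] eps by (intro divide_left_mono) auto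
      finally show "norm ((reduced_drive x - reduced_drive y) $ k) \<le> norm (((1/\<epsilon>) *\<^sub>R ?v) $ k)"
        using eps by simp
    qed
    also have "\<dots> = norm ?v / \<epsilon>" using eps by simp
    also have "\<dots> \<le> B * norm (x - y) / \<epsilon>"
      using B[of "(0, mus, x)" "(0, mus, y)"] x y eps by (simp add: S_def divide_right_mono)
    also have "\<dots> \<le> \<bar>B\<bar> / \<epsilon> * norm (x - y)"
      using eps by (simp add: divide_right_mono mult_right_mono)
    finally show "norm (reduced_drive x - reduced_drive y) \<le> \<bar>B\<bar> / \<epsilon> * norm (x - y)" .
  qed
qed

lemma reduced_solution_exists:
  assumes x0: "x0 \<in> O_eps \<epsilon>"
  obtains w where "reduced_solution s w" and "w s = x0"
proof -
  obtain L where L: "0 \<le> L" and Lip: "\<And>x y. x \<in> O_eps \<epsilon> \<Longrightarrow> y \<in> O_eps \<epsilon> \<Longrightarrow>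
      norm (reduced_drive x - reduced_drive y) \<le> L * norm (x - y)"
    using reduced_drive_Lipschitz by blast
  text \<open>Extend the drive to all of R^K through the nearest-point projection onto O_eps.\<close>
  define P where "P = closest_point (O_eps \<epsilon> :: (real^'k) set)"
  have "(0::real^'k) \<in> O_eps \<epsilon>" using eps by (simp add: O_eps_def)
  then have P: "P x \<in> O_eps \<epsilon>" and P_dist: "norm (P x - P y) \<le> norm (x - y)" for x y
    using closest_point_in_set[OF O_eps_closed] closest_point_lipschitz[OF O_eps_convex O_eps_closed]
    unfolding P_def dist_norm by blast+
  have "norm (reduced_drive (P x) - reduced_drive (P y)) \<le> L * norm (x - y)" for x y
    using Lip[OF P P, of x y] P_dist[of x y] L by (meson mult_left_mono order_trans)
  then obtain u where u0: "u 0 = x0"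
    and u: "\<And>t. 0 \<le> t \<Longrightarrow> u t \<in> O_eps \<epsilon> \<and>
      (u has_vector_derivative reduced_drive (P (u t)) - u t) (at t within {0..})"
    using relaxation_solution_in_O_eps_exists[where A="\<lambda>x. reduced_drive (P x)", OF _ L
        reduced_drive_in_O_eps[OF P] x0]
    by blast
  have P_id: "x \<in> O_eps \<epsilon> \<Longrightarrow> P x = x" for x
    unfolding P_def by (rule closest_point_self)
  define w where "w t = u (t - s)" for t
  show thesis
  proof (rule that[of w])
    show "w s = x0" using u0 by (simp add: w_def)
    have shift: "(\<lambda>t. t - s) ` {s..} = {0..}"
      by (auto simp: image_iff intro!: bexI[of _ "_ + s"])
    show "reduced_solution s w"
      unfolding is_solution_def w_def
    proof (intro allI impI conjI)
      fix t assume t: "s \<le> t"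
      show "u (t - s) \<in> O_eps \<epsilon>" using u t by simp
      have "(u has_vector_derivative reduced_drive (u (t - s)) - u (t - s)) (at (t - s) within {0..})"
        using u[of "t - s"] P_id[of "u (t - s)"] t by simp
      then have "((u \<circ> (\<lambda>t. t - s)) has_vector_derivative 1 *\<^sub>R (reduced_drive (u (t - s)) - u (t - s)))
          (at t within {s..})"
        by (intro vector_diff_chain_within) (auto intro!: derivative_eq_intros simp: shift)
      then show "((\<lambda>t. u (t - s)) has_vector_derivative
          (\<chi> k. \<pi> (0, mus, u (t - s)) $ k / \<gamma> mus $ k - u (t - s) $ k)) (at t within {s..})"
        by (simp add: o_def reduced_drive_def vec_eq_iff minus_vec_def)
    qed
  qed
qed

lemma exp_mean_pos:
  "\<theta> \<in> Theta \<epsilon> \<Longrightarrow> 0 < (\<Sum>l\<in>UNIV. \<pi> \<theta> $ l * exp (F_part \<theta> $ l))"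
  using exp_mean_bounds(1)[OF pi_prob eps order_refl] by blast

lemma drive_continuous: "continuous_on (Theta \<epsilon>) drive"
proof -
  have pi: "continuous_on (Theta \<epsilon>) (\<lambda>\<theta>. \<pi> \<theta> $ k)" for k
    by (intro continuous_intros C1_on_imp_continuous_on[OF pi_C1])
  have gamma: "continuous_on (Theta \<epsilon>) (\<lambda>\<theta>. \<gamma> (mu_part \<theta>) $ k)" for k
    by (intro continuous_intros continuous_on_compose2[OF C1_on_imp_continuous_on[OF gamma_C1]]) auto
  have "\<gamma> mu $ k \<noteq> 0" for mu k using gamma_ge[of mu k] eps by simp
  then show ?thesis
    unfolding drive_def
    by (intro continuous_on_vec_lambda continuous_on_mult continuous_on_divide pi gamma continuous_intros)
      (auto dest: exp_mean_pos)
qed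

lemma drive_reduced: "w \<in> O_eps \<epsilon> \<Longrightarrow> drive (0, mus, w) = reduced_drive w"
  using pi_sum[OF in_Theta_if_in_O_eps, of w 0 mus] by (simp add: drive_def reduced_drive_def)

lemma drive_near_reduced:
  assumes "\<nu> > 0"
  obtains \<sigma> where "\<sigma> > 0" and "\<And>\<theta>. \<theta> \<in> Theta_bar \<epsilon> \<Longrightarrow> norm (F_part \<theta>) < \<sigma> \<Longrightarrow>
      norm (mu_part \<theta> - mus) < \<sigma> \<Longrightarrow> norm (drive \<theta> - reduced_drive (o_part \<theta>)) < \<nu>"
proof -
  define C where "C = cball (0::real^'k) 1 \<times> cball mus 1 \<times> (O_eps \<epsilon> :: (real^'k) set)"
  have "C \<subseteq> Theta \<epsilon>" by (auto simp: C_def Theta_def)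
  moreover have "compact C" unfolding C_def by (intro compact_Times compact_cball O_eps_compact)
  ultimately have "uniformly_continuous_on C drive"
    by (intro compact_uniformly_continuous continuous_on_subset[OF drive_continuous])
  then obtain d where d: "d > 0"
    and close: "\<And>x x'. x \<in> C \<Longrightarrow> x' \<in> C \<Longrightarrow> dist x' x < d \<Longrightarrow> dist (drive x') (drive x) < \<nu>"
    unfolding uniformly_continuous_on_def using assms by metis
  show thesis
  proof (rule that[of "min 1 (d/2)"])
    show "0 < min 1 (d/2)" using d by simp
    fix \<theta> assume \<theta>: "\<theta> \<in> Theta_bar \<epsilon>" and F: "norm (F_part \<theta>) < min 1 (d/2)"
      and mu: "norm (mu_part \<theta> - mus) < min 1 (d/2)"
    obtain F mu w where \<theta>_eq: "\<theta> = (F, mu, w)" by (cases \<theta>) auto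
    have w: "w \<in> O_eps \<epsilon>" using \<theta> by (simp add: \<theta>_eq Theta_bar_def)
    have "dist (F, mu, w) (0, mus, w) \<le> norm F + norm (mu - mus) + norm (w - w)"
      using norm_diff_triple_le(1)[of "(F, mu, w)" 0 mus w] by (simp add: dist_norm)
    also have "\<dots> < d" using F mu by (simp add: \<theta>_eq)
    finally have "dist (drive (F, mu, w)) (drive (0, mus, w)) < \<nu>"
      using close F mu w by (simp add: \<theta>_eq C_def dist_norm norm_minus_commute)
    then show "norm (drive \<theta> - reduced_drive (o_part \<theta>)) < \<nu>"
      using drive_reduced[OF w] by (simp add: \<theta>_eq dist_norm)
  qed
qed

lemma gbar_inner_le:
  assumes \<theta>: "\<theta> \<in> Theta_bar \<epsilon>" and R: "norm (F_part \<theta>) \<le> R"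
  shows "F_part \<theta> \<bullet> F_part (gbar \<pi> \<gamma> mus \<theta>) \<le> - exp (-2*R) * (F_part \<theta> \<bullet> F_part \<theta>)"
    and "(mu_part \<theta> - mus) \<bullet> mu_part (gbar \<pi> \<gamma> mus \<theta>)
      \<le> - exp (-2*R) * ((mu_part \<theta> - mus) \<bullet> (mu_part \<theta> - mus))"
proof -
  obtain F mu w where \<theta>_eq: "\<theta> = (F, mu, w)" by (cases \<theta>) auto
  have sum0: "(\<Sum>k\<in>UNIV. F$k) = 0" and "w \<in> O_eps \<epsilon>" using \<theta> by (auto simp: \<theta>_eq Theta_bar_def)
  then have p: "\<pi> (F, mu, w) \<in> prob_eps \<epsilon>" by (intro pi_prob in_Theta_if_in_O_eps)
  show "F_part \<theta> \<bullet> F_part (gbar \<pi> \<gamma> mus \<theta>) \<le> - exp (-2*R) * (F_part \<theta> \<bullet> F_part \<theta>)"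
    using inner_F_field_le[OF p eps _ sum0] R by (simp add: \<theta>_eq gbar_def Let_def)
  show "(mu_part \<theta> - mus) \<bullet> mu_part (gbar \<pi> \<gamma> mus \<theta>)
      \<le> - exp (-2*R) * ((mu_part \<theta> - mus) \<bullet> (mu_part \<theta> - mus))"
    using inner_mu_field_le[OF p eps] R by (simp add: \<theta>_eq gbar_def Let_def)
qed

lemma solution_has_vector_derivative:
  "solution t0 \<theta> \<Longrightarrow> t0 \<le> t \<Longrightarrow> (\<theta> has_vector_derivative gbar \<pi> \<gamma> mus (\<theta> t)) (at t within {t0..})"
  by (simp add: is_solution_def)

lemma solution_in_Theta_bar: "solution t0 \<theta> \<Longrightarrow> t0 \<le> t \<Longrightarrow> \<theta> t \<in> Theta_bar \<epsilon>"
  by (simp add: is_solution_def)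

lemma solution_o_part_in_O_eps: "solution t0 \<theta> \<Longrightarrow> t0 \<le> t \<Longrightarrow> o_part (\<theta> t) \<in> O_eps \<epsilon>"
  using solution_in_Theta_bar by (force simp: Theta_bar_def)

lemma solution_F_part_norm_le:
  assumes sol: "solution t0 \<theta>" and "t0 \<le> t"
  shows "norm (F_part (\<theta> t)) \<le> norm (F_part (\<theta> t0))"
proof -
  have "norm (F_part (\<theta> t)) \<le> exp (- 0 * (t - t0)) * norm (F_part (\<theta> t0))"
  proof (rule norm_exp_decay_if_inner_derivative_le[OF _ _ \<open>t0 \<le> t\<close>])
    fix s assume s: "t0 \<le> s"
    show "((\<lambda>s. F_part (\<theta> s)) has_vector_derivative F_part (gbar \<pi> \<gamma> mus (\<theta> s))) (at s within {t0..})"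
      by (rule has_vector_derivative_fst[OF solution_has_vector_derivative[OF sol s]])
    have "F_part (\<theta> s) \<bullet> F_part (gbar \<pi> \<gamma> mus (\<theta> s))
        \<le> - exp (-2 * norm (F_part (\<theta> s))) * (F_part (\<theta> s) \<bullet> F_part (\<theta> s))"
      by (rule gbar_inner_le(1)[OF solution_in_Theta_bar[OF sol s] order_refl])
    also have "\<dots> \<le> - 0 * (F_part (\<theta> s) \<bullet> F_part (\<theta> s))" by simp
    finally show "F_part (\<theta> s) \<bullet> F_part (gbar \<pi> \<gamma> mus (\<theta> s)) \<le> - 0 * (F_part (\<theta> s) \<bullet> F_part (\<theta> s))" .
  qed
  then show ?thesis by simp
qed

lemma solution_F_mu_decay:
  assumes sol: "solution t0 \<theta>" and t: "t0 \<le> t"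
  defines "c \<equiv> exp (-2 * norm (F_part (\<theta> t0)))"
  shows "norm (F_part (\<theta> t)) \<le> exp (- c * (t - t0)) * norm (F_part (\<theta> t0))"
    and "norm (mu_part (\<theta> t) - mus) \<le> exp (- c * (t - t0)) * norm (mu_part (\<theta> t0) - mus)"
proof -
  note der = solution_has_vector_derivative[OF sol]
  have F_le: "F_part (\<theta> s) \<bullet> F_part (gbar \<pi> \<gamma> mus (\<theta> s)) \<le> - c * (F_part (\<theta> s) \<bullet> F_part (\<theta> s))"
    and mu_le: "(mu_part (\<theta> s) - mus) \<bullet> mu_part (gbar \<pi> \<gamma> mus (\<theta> s))
      \<le> - c * ((mu_part (\<theta> s) - mus) \<bullet> (mu_part (\<theta> s) - mus))" if "t0 \<le> s" for s
    unfolding c_def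
    using gbar_inner_le[OF solution_in_Theta_bar[OF sol that] solution_F_part_norm_le[OF sol that]] by auto
  show "norm (F_part (\<theta> t)) \<le> exp (- c * (t - t0)) * norm (F_part (\<theta> t0))"
    by (rule norm_exp_decay_if_inner_derivative_le[OF has_vector_derivative_fst[OF der] F_le t])
  have "((\<lambda>s. mu_part (\<theta> s) - mus) has_vector_derivative mu_part (gbar \<pi> \<gamma> mus (\<theta> s)))
      (at s within {t0..})" if "t0 \<le> s" for s
    using has_vector_derivative_diff[OF has_vector_derivative_fst[OF has_vector_derivative_snd[OF der[OF that]]]
        has_vector_derivative_const[of mus]]
    by simp
  then show "norm (mu_part (\<theta> t) - mus) \<le> exp (- c * (t - t0)) * norm (mu_part (\<theta> t0) - mus)"
    by (rule norm_exp_decay_if_inner_derivative_le[OF _ mu_le t])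
qed

lemma solution_F_mu_norm_le:
  assumes sol: "solution t0 \<theta>" and t: "t0 \<le> t"
  shows "norm (F_part (\<theta> t)) \<le> norm (F_part (\<theta> t0))"
    and "norm (mu_part (\<theta> t) - mus) \<le> norm (mu_part (\<theta> t0) - mus)"
proof -
  have "exp (- exp (-2 * norm (F_part (\<theta> t0))) * (t - t0)) \<le> 1" using t by simp
  then show "norm (F_part (\<theta> t)) \<le> norm (F_part (\<theta> t0))"
    and "norm (mu_part (\<theta> t) - mus) \<le> norm (mu_part (\<theta> t0) - mus)"
    using solution_F_mu_decay[OF sol t] mult_left_le_one_le[OF norm_ge_zero _ \<open>exp _ \<le> 1\<close>]
    by (auto intro: order_trans)
qed

lemma solution_o_part_has_vector_derivative:
  assumes "solution t0 \<theta>" and "t0 \<le> s" and "s \<le> t"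
  shows "((\<lambda>t. o_part (\<theta> t)) has_vector_derivative drive (\<theta> t) - o_part (\<theta> t)) (at t within {s..})"
proof -
  have "o_part (gbar \<pi> \<gamma> mus (\<theta> t)) = drive (\<theta> t) - o_part (\<theta> t)"
    by (cases "\<theta> t") (simp add: gbar_def drive_def Let_def vec_eq_iff)
  moreover have "(\<theta> has_vector_derivative gbar \<pi> \<gamma> mus (\<theta> t)) (at t within {s..})"
    by (rule has_vector_derivative_within_subset[OF solution_has_vector_derivative[OF assms(1)]])
      (use assms in auto)
  ultimately show ?thesis
    using has_vector_derivative_snd[OF has_vector_derivative_snd] by metis
qed

lemma o_part_close_to_reduced_solution:
  obtains C where "C > 0"
    and "\<And>\<theta> t0 s \<nu> w t. solution t0 \<theta> \<Longrightarrow> t0 \<le> s \<Longrightarrow> 0 \<le> \<nu> \<Longrightarrow>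
      (\<And>t. s \<le> t \<Longrightarrow> norm (drive (\<theta> t) - reduced_drive (o_part (\<theta> t))) \<le> \<nu>) \<Longrightarrow>
      reduced_solution s w \<Longrightarrow> w s = o_part (\<theta> s) \<Longrightarrow> s \<le> t \<Longrightarrow> t \<le> s + T \<Longrightarrow>
      norm (o_part (\<theta> t) - w t) \<le> C * \<nu>"
proof -
  obtain La where La: "0 \<le> La" and Lip: "\<And>x y. x \<in> O_eps \<epsilon> \<Longrightarrow> y \<in> O_eps \<epsilon> \<Longrightarrow>
      norm (reduced_drive x - reduced_drive y) \<le> La * norm (x - y)"
    using reduced_drive_Lipschitz by blast
  define L where "L = La + 1"
  define f where "f v = reduced_drive v - v" for v
  have f_Lip: "norm (f x - f y) \<le> L * norm (x - y)" if "x \<in> O_eps \<epsilon>" "y \<in> O_eps \<epsilon>" for x y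
    using Lip[OF that] norm_triangle_ineq4[of "reduced_drive x - reduced_drive y" "x - y"]
    by (simp add: f_def L_def algebra_simps)
  define h where "h = min 1 (1/(2*L))"
  have L: "1 \<le> L" using La by (simp add: L_def)
  have h: "0 < h" "h \<le> 1" "h * L \<le> 1/2"
    using L by (auto simp: h_def min_def field_simps)
  define N where "N = nat \<lceil>T / h\<rceil>"
  have "T / h \<le> real N" by (simp add: N_def real_nat_ceiling_ge)
  then have "T \<le> real N * h" using h by (simp add: divide_le_eq)
  show thesis
  proof (rule that[of "4^N"])
    fix \<theta> t0 s \<nu> w t
    assume sol: "solution t0 \<theta>" and "t0 \<le> s" and "0 \<le> \<nu>"
      and small: "\<And>t. s \<le> t \<Longrightarrow> norm (drive (\<theta> t) - reduced_drive (o_part (\<theta> t))) \<le> \<nu>"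
      and w: "reduced_solution s w" and ws: "w s = o_part (\<theta> s)" and "s \<le> t" "t \<le> s + T"
    have "norm (o_part (\<theta> t) - w t) \<le> 4^N * (norm (o_part (\<theta> s) - w s) + \<nu>)"
    proof (rule perturbed_solution_dist_le[where f=f and p="\<lambda>t. drive (\<theta> t) - reduced_drive (o_part (\<theta> t))"])
      fix r assume r: "s \<le> r"
      show "((\<lambda>t. o_part (\<theta> t)) has_vector_derivative
          f (o_part (\<theta> r)) + (drive (\<theta> r) - reduced_drive (o_part (\<theta> r)))) (at r within {s..})"
        using solution_o_part_has_vector_derivative[OF sol \<open>t0 \<le> s\<close> r] by (simp add: f_def)
      show "(w has_vector_derivative f (w r)) (at r within {s..})"
        using w r by (simp add: is_solution_def f_def reduced_drive_def vec_eq_iff minus_vec_def)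
      show "norm (f (o_part (\<theta> r)) - f (w r)) \<le> L * norm (o_part (\<theta> r) - w r)"
        using f_Lip solution_o_part_in_O_eps[OF sol] w r \<open>t0 \<le> s\<close> by (simp add: is_solution_def)
    qed (use small h L \<open>0 \<le> \<nu>\<close> \<open>s \<le> t\<close> \<open>t \<le> s + T\<close> \<open>T \<le> real N * h\<close> in auto)
    then show "norm (o_part (\<theta> t) - w t) \<le> 4^N * \<nu>" using ws by simp
  qed simp
qed

lemma F_mu_eventually_small:
  assumes \<rho>: "\<rho> > 0" and m: "m > 0"
  obtains T where "0 \<le> T"
    and "\<And>\<theta> t0 t. solution t0 \<theta> \<Longrightarrow> norm (F_part (\<theta> t0)) < \<rho> \<Longrightarrow> norm (mu_part (\<theta> t0) - mus) < \<rho> \<Longrightarrow>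
      t0 + T \<le> t \<Longrightarrow> norm (F_part (\<theta> t)) < m \<and> norm (mu_part (\<theta> t) - mus) < m"
proof
  define T where "T = max 0 (ln (\<rho>/m) / exp (-2*\<rho>))"
  show "0 \<le> T" by (simp add: T_def)
  fix \<theta> t0 t
  assume sol: "solution t0 \<theta>" and F: "norm (F_part (\<theta> t0)) < \<rho>" and mu: "norm (mu_part (\<theta> t0) - mus) < \<rho>"
    and t: "t0 + T \<le> t"
  then have "ln (\<rho>/m) / exp (-2*\<rho>) \<le> t - t0" "0 \<le> t - t0" by (auto simp: T_def)
  note decay_less = exp_decay_less[OF \<rho> m norm_ge_zero _ less_imp_le[OF F] this]
  show "norm (F_part (\<theta> t)) < m \<and> norm (mu_part (\<theta> t) - mus) < m"
    using solution_F_mu_decay[OF sol, of t] decay_less[OF F] decay_less[OF mu] \<open>0 \<le> t - t0\<close>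
    by (auto intro: le_less_trans)
qed

end

locale gbar_system_reduced_GAS = gbar_system \<epsilon> \<pi> \<gamma> mus
  for \<epsilon> and \<pi> :: "(real^'k) \<times> (real^'m^'k) \<times> (real^'k) \<Rightarrow> real^'k" and \<gamma> and mus +
  assumes reduced_GAS: "GAS (O_eps \<epsilon>) (\<lambda>w t. \<chi> k. \<pi> (0, mus, w) $ k / \<gamma> mus $ k - w $ k) 1"
begin

lemma o_part_eventually_near_one:
  assumes \<eta>: "\<eta> > 0"
  obtains \<nu> T where "\<nu> > 0"
    and "\<And>\<theta> t0 s t. solution t0 \<theta> \<Longrightarrow> 0 \<le> t0 \<Longrightarrow> t0 \<le> s \<Longrightarrow>
      (\<And>t. s \<le> t \<Longrightarrow> norm (drive (\<theta> t) - reduced_drive (o_part (\<theta> t))) \<le> \<nu>) \<Longrightarrow>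
      s + T \<le> t \<Longrightarrow> norm (o_part (\<theta> t) - 1) < \<eta>"
proof -
  define \<rho> where "\<rho> = 1/\<epsilon> + norm (1::real^'k) + 1"
  have \<rho>: "norm (w - 1) < \<rho>" if "w \<in> O_eps \<epsilon>" for w :: "real^'k"
    using norm_triangle_ineq4[of w 1] norm_le_if_in_O_eps[OF that] unfolding \<rho>_def by linarith
  have "\<rho> > 0" "\<eta>/2 > 0" using eps \<eta> by (simp_all add: \<rho>_def add_pos_nonneg)
  then obtain T0 where attract: "\<And>t0 w t. 0 \<le> t0 \<Longrightarrow> reduced_solution t0 w \<Longrightarrow> norm (w t0 - 1) < \<rho> \<Longrightarrow>
      t0 + T0 \<le> t \<Longrightarrow> norm (w t - 1) < \<eta>/2"
    using reduced_GAS unfolding GAS_def by meson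
  define T where "T = max 0 T0"
  obtain C where C: "C > 0" and close: "\<And>\<theta> t0 s \<nu> w t. solution t0 \<theta> \<Longrightarrow> t0 \<le> s \<Longrightarrow> 0 \<le> \<nu> \<Longrightarrow>
      (\<And>t. s \<le> t \<Longrightarrow> norm (drive (\<theta> t) - reduced_drive (o_part (\<theta> t))) \<le> \<nu>) \<Longrightarrow>
      reduced_solution s w \<Longrightarrow> w s = o_part (\<theta> s) \<Longrightarrow> s \<le> t \<Longrightarrow> t \<le> s + T \<Longrightarrow>
      norm (o_part (\<theta> t) - w t) \<le> C * \<nu>"
    using o_part_close_to_reduced_solution by blast
  show thesis
  proof (rule that[of "\<eta> / (2*C)" T])
    show "\<eta> / (2*C) > 0" using \<eta> C by simp
    fix \<theta> t0 s t
    assume sol: "solution t0 \<theta>" and "0 \<le> t0" "t0 \<le> s"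
      and small: "\<And>t. s \<le> t \<Longrightarrow> norm (drive (\<theta> t) - reduced_drive (o_part (\<theta> t))) \<le> \<eta> / (2*C)"
      and "s + T \<le> t"
    define s' where "s' = t - T"
    have s': "s \<le> s'" "t0 \<le> s'" "0 \<le> s'" "s' \<le> t"
      using \<open>s + T \<le> t\<close> \<open>0 \<le> t0\<close> \<open>t0 \<le> s\<close> by (auto simp: s'_def T_def)
    note o_in = solution_o_part_in_O_eps[OF sol \<open>t0 \<le> s'\<close>]
    obtain w where w: "reduced_solution s' w" and ws: "w s' = o_part (\<theta> s')"
      using reduced_solution_exists[OF o_in] by blast
    have "norm (w t - 1) < \<eta>/2"
      by (rule attract[OF \<open>0 \<le> s'\<close> w]) (use ws \<rho>[OF o_in] in \<open>auto simp: s'_def T_def\<close>)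
    moreover have "norm (o_part (\<theta> t) - w t) \<le> C * (\<eta> / (2*C))"
      by (rule close[OF sol \<open>t0 \<le> s'\<close> _ _ w ws \<open>s' \<le> t\<close>]) (use \<eta> C small s' in \<open>auto simp: s'_def\<close>)
    ultimately show "norm (o_part (\<theta> t) - 1) < \<eta>"
      using C norm_triangle_ineq[of "o_part (\<theta> t) - w t" "w t - 1"] by simp
  qed
qed

lemma o_part_stays_near_one:
  assumes \<eta>: "\<eta> > 0"
  obtains \<nu> \<delta> where "\<nu> > 0" and "\<delta> > 0"
    and "\<And>\<theta> t0 t. solution t0 \<theta> \<Longrightarrow> 0 \<le> t0 \<Longrightarrow>
      (\<And>t. t0 \<le> t \<Longrightarrow> norm (drive (\<theta> t) - reduced_drive (o_part (\<theta> t))) \<le> \<nu>) \<Longrightarrow>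
      norm (o_part (\<theta> t0) - 1) < \<delta> \<Longrightarrow> t0 \<le> t \<Longrightarrow> norm (o_part (\<theta> t) - 1) < \<eta>"
proof -
  obtain \<nu>1 T where "\<nu>1 > 0" and late: "\<And>\<theta> t0 s t. solution t0 \<theta> \<Longrightarrow> 0 \<le> t0 \<Longrightarrow> t0 \<le> s \<Longrightarrow>
      (\<And>t. s \<le> t \<Longrightarrow> norm (drive (\<theta> t) - reduced_drive (o_part (\<theta> t))) \<le> \<nu>1) \<Longrightarrow>
      s + T \<le> t \<Longrightarrow> norm (o_part (\<theta> t) - 1) < \<eta>"
    using o_part_eventually_near_one[OF \<eta>] by blast
  have "\<eta>/2 > 0" using \<eta> by simp
  then obtain \<delta> where "\<delta> > 0" and stable: "\<And>t0 w t. 0 \<le> t0 \<Longrightarrow> reduced_solution t0 w \<Longrightarrow>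
      norm (w t0 - 1) < \<delta> \<Longrightarrow> t0 \<le> t \<Longrightarrow> norm (w t - 1) < \<eta>/2"
    using reduced_GAS unfolding GAS_def by meson
  obtain C where C: "C > 0" and close: "\<And>\<theta> t0 s \<nu> w t. solution t0 \<theta> \<Longrightarrow> t0 \<le> s \<Longrightarrow> 0 \<le> \<nu> \<Longrightarrow>
      (\<And>t. s \<le> t \<Longrightarrow> norm (drive (\<theta> t) - reduced_drive (o_part (\<theta> t))) \<le> \<nu>) \<Longrightarrow>
      reduced_solution s w \<Longrightarrow> w s = o_part (\<theta> s) \<Longrightarrow> s \<le> t \<Longrightarrow> t \<le> s + T \<Longrightarrow>
      norm (o_part (\<theta> t) - w t) \<le> C * \<nu>"
    using o_part_close_to_reduced_solution by blast
  define \<nu> where "\<nu> = min \<nu>1 (\<eta> / (2*C))"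
  show thesis
  proof (rule that[of \<nu> \<delta>])
    show "\<nu> > 0" using \<open>\<nu>1 > 0\<close> \<eta> C by (simp add: \<nu>_def)
    fix \<theta> t0 t
    assume sol: "solution t0 \<theta>" and "0 \<le> t0"
      and small: "\<And>t. t0 \<le> t \<Longrightarrow> norm (drive (\<theta> t) - reduced_drive (o_part (\<theta> t))) \<le> \<nu>"
      and near: "norm (o_part (\<theta> t0) - 1) < \<delta>" and "t0 \<le> t"
    show "norm (o_part (\<theta> t) - 1) < \<eta>"
    proof (cases "t0 + T \<le> t")
      case True
      then show ?thesis
        using late[OF sol \<open>0 \<le> t0\<close> order_refl] small by (force simp: \<nu>_def)
    next
      case False
      obtain w where w: "reduced_solution t0 w" and wt0: "w t0 = o_part (\<theta> t0)"
        using reduced_solution_exists[OF solution_o_part_in_O_eps[OF sol order_refl]] by blast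
      have "norm (w t - 1) < \<eta>/2"
        using stable[OF \<open>0 \<le> t0\<close> w _ \<open>t0 \<le> t\<close>] near wt0 by simp
      moreover have "norm (o_part (\<theta> t) - w t) \<le> C * \<nu>"
        using close[OF sol order_refl _ small w wt0 \<open>t0 \<le> t\<close>] False \<open>\<nu> > 0\<close> by simp
      moreover have "C * \<nu> \<le> \<eta>/2"
        using C by (simp add: \<nu>_def min_def field_simps)
      ultimately show ?thesis
        using norm_triangle_ineq[of "o_part (\<theta> t) - w t" "w t - 1"] by simp
    qed
  qed (use \<open>\<delta> > 0\<close> in simp)
qed

lemma equilibrium: "(0, mus, 1) \<in> Theta_bar \<epsilon>" "gbar \<pi> \<gamma> mus (0, mus, 1) = 0"
proof -
  have one: "(1::real^'k) \<in> O_eps \<epsilon>" and rest: "(\<chi> k. \<pi> (0, mus, 1) $ k / \<gamma> mus $ k - 1) = 0"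
    using reduced_GAS by (auto simp: GAS_def)
  have ratio: "\<pi> (0, mus, 1) $ k / \<gamma> mus $ k = 1" for k
    using arg_cong[where f="\<lambda>v. v $ k", OF rest] unfolding vec_lambda_beta zero_index by linarith
  show "(0, mus, 1) \<in> Theta_bar \<epsilon>" using one by (simp add: Theta_bar_def)
  show "gbar \<pi> \<gamma> mus (0, mus, 1) = 0"
    using pi_sum[OF in_Theta_if_in_O_eps[OF one]]
    by (simp add: gbar_def Let_def vec_eq_iff ratio zero_prod_def)
qed

lemma uniformly_stable:
  assumes \<eta>: "\<eta> > 0"
  shows "\<exists>\<delta>>0. \<forall>t0\<ge>0. \<forall>z. solution t0 z \<and> norm (z t0 - (0, mus, 1)) < \<delta>
    \<longrightarrow> (\<forall>t\<ge>t0. norm (z t - (0, mus, 1)) < \<eta>)"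
proof -
  have "\<eta>/3 > 0" using \<eta> by simp
  then obtain \<nu> \<delta>o where "\<nu> > 0" "\<delta>o > 0"
    and o_near: "\<And>\<theta> t0 t. solution t0 \<theta> \<Longrightarrow> 0 \<le> t0 \<Longrightarrow>
      (\<And>t. t0 \<le> t \<Longrightarrow> norm (drive (\<theta> t) - reduced_drive (o_part (\<theta> t))) \<le> \<nu>) \<Longrightarrow>
      norm (o_part (\<theta> t0) - 1) < \<delta>o \<Longrightarrow> t0 \<le> t \<Longrightarrow> norm (o_part (\<theta> t) - 1) < \<eta>/3"
    using o_part_stays_near_one by blast
  obtain \<sigma> where "\<sigma> > 0" and drive_near: "\<And>\<theta>. \<theta> \<in> Theta_bar \<epsilon> \<Longrightarrow> norm (F_part \<theta>) < \<sigma> \<Longrightarrow>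
      norm (mu_part \<theta> - mus) < \<sigma> \<Longrightarrow> norm (drive \<theta> - reduced_drive (o_part \<theta>)) < \<nu>"
    using drive_near_reduced[OF \<open>\<nu> > 0\<close>] by blast
  define \<delta> where "\<delta> = min (min (\<eta>/3) \<sigma>) \<delta>o"
  have "\<delta> > 0" using \<eta> \<open>\<sigma> > 0\<close> \<open>\<delta>o > 0\<close> by (simp add: \<delta>_def)
  moreover have "norm (z t - (0, mus, 1)) < \<eta>"
    if "0 \<le> t0" and sol: "solution t0 z" and z0: "norm (z t0 - (0, mus, 1)) < \<delta>" and "t0 \<le> t" for t0 z t
  proof -
    have F: "norm (F_part (z s)) < \<delta>" and mu: "norm (mu_part (z s) - mus) < \<delta>" if "t0 \<le> s" for s
      using solution_F_mu_norm_le[OF sol that] norm_diff_triple_le(2,3)[where \<theta>="z t0" and a=0 and b=mus and c=1] z0 by auto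
    have "norm (o_part (z t) - 1) < \<eta>/3"
    proof (rule o_near[OF sol \<open>0 \<le> t0\<close> _ _ \<open>t0 \<le> t\<close>])
      show "norm (o_part (z t0) - 1) < \<delta>o" using norm_diff_triple_le(4)[where \<theta>="z t0" and a=0 and b=mus and c=1] z0 by (simp add: \<delta>_def)
      fix s assume "t0 \<le> s"
      show "norm (drive (z s) - reduced_drive (o_part (z s))) \<le> \<nu>"
        using drive_near[OF solution_in_Theta_bar[OF sol \<open>t0 \<le> s\<close>]] F[OF \<open>t0 \<le> s\<close>] mu[OF \<open>t0 \<le> s\<close>]
        by (simp add: \<delta>_def)
    qed
    then show ?thesis
      using norm_diff_triple_le(1)[where \<theta>="z t" and a=0 and b=mus and c=1] F[OF \<open>t0 \<le> t\<close>] mu[OF \<open>t0 \<le> t\<close>] by (simp add: \<delta>_def)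
  qed
  ultimately show ?thesis by blast
qed

lemma uniformly_attractive:
  assumes \<eta>: "\<eta> > 0" and \<rho>: "\<rho> > 0"
  shows "\<exists>T. \<forall>t0\<ge>0. \<forall>z. solution t0 z \<and> norm (z t0 - (0, mus, 1)) < \<rho>
    \<longrightarrow> (\<forall>t\<ge>t0 + T. norm (z t - (0, mus, 1)) < \<eta>)"
proof -
  have "\<eta>/3 > 0" using \<eta> by simp
  then obtain \<nu> T2 where "\<nu> > 0"
    and o_near: "\<And>\<theta> t0 s t. solution t0 \<theta> \<Longrightarrow> 0 \<le> t0 \<Longrightarrow> t0 \<le> s \<Longrightarrow>
      (\<And>t. s \<le> t \<Longrightarrow> norm (drive (\<theta> t) - reduced_drive (o_part (\<theta> t))) \<le> \<nu>) \<Longrightarrow>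
      s + T2 \<le> t \<Longrightarrow> norm (o_part (\<theta> t) - 1) < \<eta>/3"
    using o_part_eventually_near_one by blast
  obtain \<sigma> where "\<sigma> > 0" and drive_near: "\<And>\<theta>. \<theta> \<in> Theta_bar \<epsilon> \<Longrightarrow> norm (F_part \<theta>) < \<sigma> \<Longrightarrow>
      norm (mu_part \<theta> - mus) < \<sigma> \<Longrightarrow> norm (drive \<theta> - reduced_drive (o_part \<theta>)) < \<nu>"
    using drive_near_reduced[OF \<open>\<nu> > 0\<close>] by blast
  define m where "m = min (\<eta>/3) \<sigma>"
  have "m > 0" using \<eta> \<open>\<sigma> > 0\<close> by (simp add: m_def)
  then obtain T1 where "0 \<le> T1"
    and small: "\<And>\<theta> t0 t. solution t0 \<theta> \<Longrightarrow> norm (F_part (\<theta> t0)) < \<rho> \<Longrightarrow>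
      norm (mu_part (\<theta> t0) - mus) < \<rho> \<Longrightarrow> t0 + T1 \<le> t \<Longrightarrow>
      norm (F_part (\<theta> t)) < m \<and> norm (mu_part (\<theta> t) - mus) < m"
    using F_mu_eventually_small[OF \<rho>] by blast
  have "norm (z t - (0, mus, 1)) < \<eta>"
    if "0 \<le> t0" and sol: "solution t0 z" and z0: "norm (z t0 - (0, mus, 1)) < \<rho>"
      and t: "t0 + (T1 + max 0 T2) \<le> t" for t0 z t
  proof -
    have F_mu: "norm (F_part (z s)) < m \<and> norm (mu_part (z s) - mus) < m" if "t0 + T1 \<le> s" for s
      using small[OF sol _ _ that] norm_diff_triple_le(2,3)[where \<theta>="z t0" and a=0 and b=mus and c=1] z0 by simp
    have "norm (o_part (z t) - 1) < \<eta>/3"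
    proof (rule o_near[OF sol \<open>0 \<le> t0\<close>])
      show "t0 \<le> t0 + T1" "t0 + T1 + T2 \<le> t" using \<open>0 \<le> T1\<close> t by auto
      fix s assume s: "t0 + T1 \<le> s"
      then have "t0 \<le> s" using \<open>0 \<le> T1\<close> by simp
      then show "norm (drive (z s) - reduced_drive (o_part (z s))) \<le> \<nu>"
        using drive_near[OF solution_in_Theta_bar[OF sol \<open>t0 \<le> s\<close>]] F_mu[OF s] by (simp add: m_def)
    qed
    moreover have "t0 + T1 \<le> t" using t by simp
    ultimately show ?thesis
      using norm_diff_triple_le(1)[where \<theta>="z t" and a=0 and b=mus and c=1] F_mu[of t] by (simp add: m_def)
  qed
  then show ?thesis by blast
qed

theorem GAS_gbar: "GAS (Theta_bar \<epsilon>) (\<lambda>\<theta> t. gbar \<pi> \<gamma> mus \<theta>) (0, mus, 1)"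
  unfolding GAS_def using equilibrium uniformly_stable uniformly_attractive by blast

end

theorem proposition2:
  fixes \<epsilon> :: real
    and \<pi> :: "(real^'k) \<times> (real^'m^'k) \<times> (real^'k) \<Rightarrow> real^'k"
    and \<gamma> :: "real^'m^'k \<Rightarrow> real^'k"
    and mus :: "real^'m^'k"
  assumes K2: "CARD('k) \<ge> 2"
    and eps: "\<epsilon> > 0"
    and pi_range: "\<forall>\<theta>\<in>Theta \<epsilon>. \<pi> \<theta> \<in> prob_eps \<epsilon>"
    and pi_C1: "C1_on (Theta \<epsilon>) \<pi>"
    and gamma_range: "\<forall>mu. \<gamma> mu \<in> prob_eps \<epsilon>"
    and gamma_C1: "C1_on UNIV \<gamma>"
    and reduced_GAS: "GAS (O_eps \<epsilon>)
                        (\<lambda>w t. \<chi> k. \<pi> (0, mus, w) $ k / \<gamma> mus $ k - w $ k) 1"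
  shows "GAS (Theta_bar \<epsilon>) (\<lambda>\<theta> t. gbar \<pi> \<gamma> mus \<theta>) (0, mus, 1)"
proof -
  interpret gbar_system_reduced_GAS \<epsilon> \<pi> \<gamma> mus
    by unfold_locales (fact eps pi_range pi_C1 gamma_range gamma_C1 reduced_GAS)+
  show ?thesis by (rule GAS_gbar)
qed

end
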